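(* Let $a<b$, $p>1$, $\theta=p$, $F(u)=\frac{1}{2\theta}|1-u^2|^{\theta}$, and let $E_\varepsilon[u]=\int_a^b\big[\frac{\varepsilon^{p-1}|u_x|^p}{p}+\frac{F(u)}{\varepsilon}\big]dx$. Let $N\in\mathbb{N}$ and let $v:[a,b]\to\{-1,1\}$ be piecewise constant with exactly $N$ jumps located at $a<h_1<\dots<h_N<b$. Let $r>0$ satisfy $r<\frac{h_{i+1}-h_i}{2}$ for $i=1,\dots,N-1$, $a\le h_1-r$ and $h_N+r\le b$, let $\lambda_p:=2^{1-1/p}(p-1)^{-1/p}$, and fix $A\in(0,r\sqrt2\lambda_p)$. Then there exist $\varepsilon_0,C,\delta>0$ (depending only on $p,v,A$) such that, if $u\in H^1(a,b)$ satisfies $\|\tilde u-\tilde v\|_{L^1(a,b)}\le\delta$, then for every $\varepsilon\in(0,\varepsilon_0)$ $$E_\varepsilon[u]\ge Nc_p-C\exp(-Ap/2\varepsilon).$$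
   Context: For a function $w$ on $[a,b]$, $\tilde w(x):=\int_a^x w(y)\,dy$. The constant $c_p$ is $c_p:=\left(\frac{p}{p-1}\right)^{\frac{p-1}{p}}\int_{-1}^{1}F(s)^{\frac{p-1}{p}}ds$. *)

theory Defs
  imports "HOL-Analysis.Analysis"
begin

definition Fpot :: "real \<Rightarrow> real \<Rightarrow> real" where
  "Fpot p s = \<bar>1 - s\<^sup>2\<bar> powr p / (2 * p)"

definition c_const :: "real \<Rightarrow> real" where
  "c_const p = (p / (p - 1)) powr ((p - 1) / p) *
      (\<integral> s\<in>{-1..1}. (Fpot p s) powr ((p - 1) / p) \<partial>lborel)"

definition lambda_const :: "real \<Rightarrow> real" where
  "lambda_const p = 2 powr (1 - 1 / p) * (p - 1) powr (- 1 / p)"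

text \<open>Energy E_eps[u] on (a,b); g is the weak derivative u_x.
  Valued in [0,infinity] since |u_x|^p need not be integrable for u in H^1.\<close>
definition energy :: "real \<Rightarrow> real \<Rightarrow> real \<Rightarrow> real \<Rightarrow> (real \<Rightarrow> real) \<Rightarrow> (real \<Rightarrow> real) \<Rightarrow> ennreal" where
  "energy p a b \<epsilon> u g = (\<integral>\<^sup>+ x\<in>{a..b}.
      ennreal (\<epsilon> powr (p - 1) * \<bar>g x\<bar> powr p / p + Fpot p (u x) / \<epsilon>) \<partial>lborel)"

text \<open>u in H^1(a,b) with weak derivative g: g Borel measurable, square integrable
  (hence integrable) on (a,b), and u(x) = u(a) + int_a^x g on [a,b]
  (u is identified with its absolutely continuous representative).\<close>
definition H1_with_deriv :: "real \<Rightarrow> real \<Rightarrow> (real \<Rightarrow> real) \<Rightarrow> (real \<Rightarrow> real) \<Rightarrow> bool" where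
  "H1_with_deriv a b u g \<longleftrightarrow>
     g \<in> borel_measurable borel \<and>
     set_integrable lborel {a..b} g \<and>
     set_integrable lborel {a..b} (\<lambda>x. (g x)\<^sup>2) \<and>
     (\<forall>x\<in>{a..b}. u x = u a + (\<integral> y\<in>{a..x}. g y \<partial>lborel))"

text \<open>Primitive tilde w(x) = int_a^x w.\<close>
definition prim :: "real \<Rightarrow> (real \<Rightarrow> real) \<Rightarrow> real \<Rightarrow> real" where
  "prim a w x = (\<integral> y\<in>{a..x}. w y \<partial>lborel)"

end

(* With q = p / (p - 1) and Phi' = phi = (q F)^(1/q), Young's inequality gives
     (M (Phi(u) - Phi(1)))' <= eps^(p-1) |u'|^p / p + F(u) / eps
   for every weight M with eps M' (Phi(u) - Phi(1)) <= (1 - |M|^q) F(u).  With M = +-1 the energy on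
   an interval bounds the increment of Phi(u), so a passage from -1 to 1 costs c_p = Phi(1) - Phi(-1)
   up to what is lost near the wells.  On a window of length L next to a well, the weight which drops
   linearly from B1 to 0 over a layer of width O(eps), and rises like 1 - (1 - B1) exp(-k d / eps) at
   distance d from that layer, is admissible; so the loss is O(exp(-k L / eps)), and the constants
   can be chosen with k L >= A p / 2.  Finally, if the primitives of u and v are L^1-close, then u
   comes close to -sigma and to sigma on the two sides of each jump of v, so each of the N disjoint
   windows around the jumps contains a full passage. *)

theory Submission
  imports Defs
begin

section \<open>The potential and the calibration function\<close>

lemma Fpot_nonneg: "p > 0 \<Longrightarrow> Fpot p s \<ge> 0"
  by (simp add: Fpot_def)

lemma Fpot_minus [simp]: "Fpot p (- s) = Fpot p s"
  by (simp add: Fpot_def)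

lemma continuous_on_Fpot: "p > 0 \<Longrightarrow> continuous_on UNIV (Fpot p)"
  unfolding Fpot_def[abs_def]
  by (intro continuous_intros continuous_on_powr') auto

lemma abs_one_minus_square:
  fixes s :: real
  assumes "-1 \<le> s" "s \<le> 1"
  shows "\<bar>1 - s\<^sup>2\<bar> = (1 - s) * (1 + s)"
proof -
  have "1 - s\<^sup>2 = (1 - s) * (1 + s)"
    by (simp add: power2_eq_square algebra_simps)
  moreover have "(1 - s) * (1 + s) \<ge> 0"
    using assms by simp
  ultimately show ?thesis
    by simp
qed

lemma Fpot_eq_factored:
  fixes s :: real
  assumes "-1 \<le> s" "s \<le> 1"
  shows "Fpot p s = (1 - s) powr p * (1 + s) powr p / (2 * p)"
  using assms by (simp add: Fpot_def abs_one_minus_square powr_mult)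

definition phi :: "real \<Rightarrow> real \<Rightarrow> real" where
  "phi p s = (p / (p - 1)) powr ((p - 1) / p) * Fpot p s powr ((p - 1) / p)"

definition Phi :: "real \<Rightarrow> real \<Rightarrow> real" where
  "Phi p s = integral {0..s} (phi p) - integral {s..0} (phi p)"

definition phi_coeff :: "real \<Rightarrow> real" where
  "phi_coeff p = (p / (p - 1)) powr ((p - 1) / p) / (2 * p) powr ((p - 1) / p)"

lemma phi_nonneg: "phi p s \<ge> 0"
  by (simp add: phi_def)

lemma phi_minus [simp]: "phi p (- s) = phi p s"
  by (simp add: phi_def)

lemma continuous_on_phi:
  assumes "p > 1"
  shows "continuous_on UNIV (phi p)"
  unfolding phi_def[abs_def] using assms
  by (intro continuous_on_mult continuous_on_const continuous_on_powr' continuous_on_Fpot)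
     (auto simp: Fpot_nonneg)

lemma phi_eq:
  assumes "p > 1"
  shows "phi p s = phi_coeff p * \<bar>1 - s\<^sup>2\<bar> powr (p - 1)"
proof -
  have "Fpot p s powr ((p - 1) / p) = (\<bar>1 - s\<^sup>2\<bar> powr p) powr ((p - 1) / p) / (2 * p) powr ((p - 1) / p)"
    by (simp add: Fpot_def powr_divide)
  also have "(\<bar>1 - s\<^sup>2\<bar> powr p) powr ((p - 1) / p) = \<bar>1 - s\<^sup>2\<bar> powr (p - 1)"
    using assms by (simp add: powr_powr)
  finally show ?thesis
    by (simp add: phi_def phi_coeff_def)
qed

lemma phi_coeff_pos: "p > 1 \<Longrightarrow> phi_coeff p > 0"
  by (simp add: phi_coeff_def)

lemma phi_powr_conjugate:
  assumes "p > 1"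
  shows "phi p s powr (p / (p - 1)) = p / (p - 1) * Fpot p s"
proof -
  have "(p - 1) / p * (p / (p - 1)) = 1"
    using assms by (simp add: field_simps)
  then show ?thesis
    using assms by (simp add: phi_def powr_mult powr_powr Fpot_nonneg)
qed

lemma phi_antimono:
  assumes "p > 1" "0 \<le> s" "s \<le> t" "t \<le> 1"
  shows "phi p t \<le> phi p s"
proof -
  have "s * s \<le> t * t"
    using assms by (intro mult_mono) auto
  moreover have "t * t \<le> 1"
    using assms by (intro mult_le_one) auto
  ultimately have "\<bar>1 - t\<^sup>2\<bar> \<le> \<bar>1 - s\<^sup>2\<bar>"
    by (simp add: power2_eq_square)
  then have "\<bar>1 - t\<^sup>2\<bar> powr (p - 1) \<le> \<bar>1 - s\<^sup>2\<bar> powr (p - 1)"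
    using assms by (intro powr_mono2) auto
  then show ?thesis
    using phi_coeff_pos[OF assms(1)] by (simp add: phi_eq[OF assms(1)])
qed

lemma Phi_has_derivative:
  assumes "p > 1"
  shows "(Phi p has_real_derivative phi p s) (at s)"
proof -
  define T where "T = \<bar>s\<bar> + 1"
  define G where "G y = integral {-T..y} (phi p)" for y
  have cont: "continuous_on {-T..T} (phi p)"
    using continuous_on_phi[OF assms] by (rule continuous_on_subset) auto
  then have int: "phi p integrable_on {-T..T}"
    by (rule integrable_continuous_real)
  have s: "s \<in> {-T..T}" "-T < s" "s < T"
    by (auto simp: T_def)
  have "(G has_real_derivative phi p s) (at s within {-T..T})"
    unfolding G_def by (rule integral_has_real_derivative[OF cont s(1)])
  then have "(G has_real_derivative phi p s) (at s)"
    using s by (simp add: at_within_Icc_at)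
  then have dG: "((\<lambda>y. G y - G 0) has_real_derivative phi p s) (at s)"
    by (auto intro!: derivative_eq_intros)
  have eq: "G y - G 0 = Phi p y" if "y \<in> {-T<..<T}" for y
  proof (cases "y \<ge> 0")
    case True
    then have "integral {-T..0} (phi p) + integral {0..y} (phi p) = integral {-T..y} (phi p)"
      using that by (intro Henstock_Kurzweil_Integration.integral_combine integrable_subinterval_real[OF int]) auto
    then show ?thesis
      using True by (cases "y = 0") (auto simp: G_def Phi_def)
  next
    case False
    then have "integral {-T..y} (phi p) + integral {y..0} (phi p) = integral {-T..0} (phi p)"
      using that by (intro Henstock_Kurzweil_Integration.integral_combine integrable_subinterval_real[OF int]) auto
    then show ?thesis
      using False by (simp add: G_def Phi_def)
  qed
  show ?thesis
    by (rule has_field_derivative_transform_within_open[OF dG, of "{-T<..<T}"]) (use s eq in auto)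
qed

lemma continuous_on_Phi: "p > 1 \<Longrightarrow> continuous_on UNIV (Phi p)"
  using Phi_has_derivative by (meson DERIV_isCont continuous_at_imp_continuous_on)

lemma Phi_mono:
  assumes "p > 1" "x \<le> y"
  shows "Phi p x \<le> Phi p y"
  using assms(2)
  by (rule DERIV_nonneg_imp_increasing_open)
     (use Phi_has_derivative[OF assms(1)] phi_nonneg continuous_on_Phi[OF assms(1)]
      in \<open>auto intro: continuous_on_subset\<close>)

lemma Phi_minus:
  assumes "p > 1"
  shows "Phi p (- s) = - Phi p s"
proof -
  have "((\<lambda>s. Phi p (- s) + Phi p s) has_real_derivative 0) (at x)" for x
  proof -
    have "((\<lambda>z. Phi p (- z)) has_real_derivative phi p (- x) * (- 1)) (at x)"
      by (rule DERIV_chain2[OF Phi_has_derivative[OF assms]]) (auto intro!: derivative_eq_intros)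
    from DERIV_add[OF this Phi_has_derivative[OF assms]] show ?thesis
      by simp
  qed
  then show ?thesis
    using DERIV_isconst_all[of "\<lambda>s. Phi p (- s) + Phi p s" s 0] by (simp add: Phi_def)
qed

lemma c_const_eq_Phi:
  assumes "p > 1"
  shows "c_const p = Phi p 1 - Phi p (-1)"
proof -
  have cont: "continuous_on {-1..1} (phi p)"
    using continuous_on_phi[OF assms] by (rule continuous_on_subset) auto
  have "c_const p = (LINT s:{-1..1}|lborel. phi p s)"
    unfolding c_const_def phi_def by (simp add: set_integral_mult_right)
  also have "\<dots> = integral {-1..1} (phi p)"
    by (rule set_borel_integral_eq_integral(2)[OF borel_integrable_atLeastAtMost'[OF cont]])
  also have "\<dots> = integral {-1..0} (phi p) + integral {0..1} (phi p)"
    using integrable_continuous_real[OF cont]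
    by (intro Henstock_Kurzweil_Integration.integral_combine[symmetric]) auto
  finally show ?thesis
    by (simp add: Phi_def)
qed

lemma Phi_top_increment_le_next:
  assumes p: "p > 1" and \<rho>: "0 < \<rho>" "\<rho> \<le> 1/2"
  shows "Phi p 1 - Phi p (1 - \<rho>) \<le> Phi p (1 - \<rho>) - Phi p (1 - 2 * \<rho>)"
proof -
  obtain z where z: "1 - \<rho> < z" "z < 1" "Phi p 1 - Phi p (1 - \<rho>) = \<rho> * phi p z"
    using MVT2[of "1 - \<rho>" 1 "Phi p" "phi p"] Phi_has_derivative[OF p] \<rho> by auto
  obtain z' where z': "1 - 2 * \<rho> < z'" "z' < 1 - \<rho>" "Phi p (1 - \<rho>) - Phi p (1 - 2 * \<rho>) = \<rho> * phi p z'"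
    using MVT2[of "1 - 2 * \<rho>" "1 - \<rho>" "Phi p" "phi p"] Phi_has_derivative[OF p] \<rho> by auto
  have "phi p z \<le> phi p z'"
    using phi_antimono[OF p, of z' z] z z' \<rho> by auto
  then show ?thesis
    using z(3) z'(3) \<rho> by (simp add: mult_left_mono)
qed

definition well_ratio :: "real \<Rightarrow> real \<Rightarrow> real" where
  "well_ratio p \<rho> = phi_coeff p / (1 - \<rho>) powr p"

lemma well_ratio_pos: "p > 1 \<Longrightarrow> \<rho> < 1 \<Longrightarrow> well_ratio p \<rho> > 0"
  by (simp add: well_ratio_def phi_coeff_pos)

text \<open>Near the well \<open>s = 1\<close> both sides vanish like \<open>(1 - s)\<^sup>p\<close>; compare \<open>phi\<close> with the
  derivative of \<open>(1 - s)\<^sup>p\<close> and bound \<open>1 + s\<close> from above by \<open>2\<close> and from below by \<open>2 - 2 \<rho>\<close>.\<close>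
lemma Phi_deficit_le:
  assumes p: "p > 1" and \<rho>: "0 < \<rho>" "\<rho> \<le> 1/2" and s: "1 - 2 * \<rho> \<le> s" "s \<le> 1"
  shows "Phi p 1 - Phi p s \<le> well_ratio p \<rho> * Fpot p s"
proof -
  define K where "K = phi_coeff p * 2 powr (p - 1) / p"
  define H where "H t = - (K * (1 - t) powr p) - Phi p t" for t
  have "H s \<le> H 1"
  proof (rule DERIV_nonneg_imp_increasing_open[OF s(2)])
    fix t assume t: "s < t" "t < 1"
    have "phi p t = phi_coeff p * ((1 - t) powr (p - 1) * (1 + t) powr (p - 1))"
      using t s \<rho> by (simp add: phi_eq[OF p] abs_one_minus_square powr_mult)
    also have "\<dots> \<le> phi_coeff p * ((1 - t) powr (p - 1) * 2 powr (p - 1))"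
      using t s \<rho> p phi_coeff_pos[OF p] by (intro mult_left_mono powr_mono2) auto
    also have "\<dots> = K * p * (1 - t) powr (p - 1)"
      using p by (simp add: K_def)
    finally have "phi p t \<le> K * p * (1 - t) powr (p - 1)" .
    moreover have "(H has_real_derivative (K * p * (1 - t) powr (p - 1) - phi p t)) (at t)"
      unfolding H_def[abs_def] using t
      by (auto intro!: derivative_eq_intros Phi_has_derivative[OF p] simp: powr_diff)
    ultimately show "\<exists>y. (H has_real_derivative y) (at t) \<and> 0 \<le> y"
      by auto
  next
    show "continuous_on {s..1} H"
      unfolding H_def[abs_def] using p
      by (intro continuous_intros continuous_on_powr' continuous_on_subset[OF continuous_on_Phi[OF p]]) auto
  qed
  then have "Phi p 1 - Phi p s \<le> K * (1 - s) powr p"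
    by (simp add: H_def)
  also have "\<dots> = well_ratio p \<rho> * ((1 - s) powr p * (2 - 2 * \<rho>) powr p / (2 * p))"
  proof -
    have "(2 - 2 * \<rho>) powr p = 2 powr p * (1 - \<rho>) powr p"
      using powr_mult[of 2 "1 - \<rho>" p] \<rho> by (simp add: algebra_simps)
    then show ?thesis
      using p \<rho> by (simp add: K_def well_ratio_def powr_diff field_simps)
  qed
  also have "\<dots> \<le> well_ratio p \<rho> * Fpot p s"
    using s \<rho> p well_ratio_pos[OF p, of \<rho>]
    by (auto simp: Fpot_eq_factored intro!: mult_left_mono divide_right_mono powr_mono2)
  finally show ?thesis .
qed

section \<open>A chain rule inequality for absolutely continuous functions\<close>

lemma increment_le_integral_of_local:
  fixes W f :: "real \<Rightarrow> real"
  assumes x01: "x0 \<le> x1" and f: "f integrable_on {x0..x1}"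
    and local: "\<And>x. x \<in> {x0..x1} \<Longrightarrow> \<exists>d>0. \<forall>a b. x0 \<le> a \<and> a \<le> x \<and> x \<le> b \<and> b \<le> x1 \<and> b - a < d
                  \<longrightarrow> W b - W a \<le> integral {a..b} f"
  shows "W x1 - W x0 \<le> integral {x0..x1} f"
proof -
  define P where "P a b \<longleftrightarrow> (x0 \<le> a \<longrightarrow> b \<le> x1 \<longrightarrow> W b - W a \<le> integral {a..b} f)" for a b
  have "P x0 x1"
  proof (induct rule: Bolzano[OF x01])
    case (1 a b c)
    show ?case
      unfolding P_def
    proof (intro impI)
      assume "x0 \<le> a" "c \<le> x1"
      then have "integral {a..c} f = integral {a..b} f + integral {b..c} f"
        using 1 by (intro Henstock_Kurzweil_Integration.integral_combine[symmetric]
                          integrable_subinterval_real[OF f]) auto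
      then show "W c - W a \<le> integral {a..c} f"
        using 1 \<open>x0 \<le> a\<close> \<open>c \<le> x1\<close> unfolding P_def by auto
    qed
  next
    case (2 x)
    then show ?case
      using local[of x] unfolding P_def by fastforce
  qed
  then show ?thesis
    by (simp add: P_def)
qed

lemma has_derivative_pair_product:
  fixes M D :: "real \<Rightarrow> real"
  assumes "(M has_real_derivative m) (at x)" "(D has_real_derivative d) (at s)"
  shows "((\<lambda>z. M (fst z) * D (snd z)) has_derivative (\<lambda>h. m * fst h * D s + M x * (d * snd h))) (at (x, s))"
proof -
  have 1: "((\<lambda>z. M (fst z)) has_derivative (\<lambda>h. fst h * m)) (at (x, s))"
    using DERIV_compose_FDERIV[where g=fst and x="(x,s)", OF _ has_derivative_fst[OF has_derivative_ident]] assms(1)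
    by simp
  have 2: "((\<lambda>z. D (snd z)) has_derivative (\<lambda>h. snd h * d)) (at (x, s))"
    using DERIV_compose_FDERIV[where g=snd and x="(x,s)", OF _ has_derivative_snd[OF has_derivative_ident]] assms(2)
    by simp
  from has_derivative_mult[OF 1 2] show ?thesis
    by (simp add: algebra_simps)
qed

lemma product_composition_linearization:
  fixes M D u :: "real \<Rightarrow> real"
  assumes dM: "(M has_real_derivative m) (at x)" and dD: "(D has_real_derivative d) (at (u x))"
    and u: "continuous (at x within S) u" and \<eta>: "\<eta> > 0"
  shows "\<exists>\<delta>>0. \<forall>t\<in>S. \<bar>t - x\<bar> < \<delta> \<longrightarrow>
           \<bar>M t * D (u t) - M x * D (u x) - m * D (u x) * (t - x) - M x * d * (u t - u x)\<bar>
             \<le> \<eta> * (\<bar>t - x\<bar> + \<bar>u t - u x\<bar>)"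
proof -
  obtain d1 where d1: "d1 > 0" and lin:
    "\<And>y. norm (y - (x, u x)) < d1 \<Longrightarrow>
       norm (M (fst y) * D (snd y) - M x * D (u x)
             - (m * fst (y - (x, u x)) * D (u x) + M x * (d * snd (y - (x, u x)))))
         \<le> \<eta> * norm (y - (x, u x))"
    using has_derivative_pair_product[OF dM dD] \<eta> unfolding has_derivative_within_alt by fastforce
  obtain d2 where d2: "d2 > 0" and close: "\<And>t. t \<in> S \<Longrightarrow> \<bar>t - x\<bar> < d2 \<Longrightarrow> \<bar>u t - u x\<bar> < d1 / 2"
    using u d1 unfolding continuous_within_eps_delta dist_real_def by (metis half_gt_zero)
  show ?thesis
  proof (intro exI[of _ "min (d1 / 2) d2"] conjI ballI impI)
    fix t assume t: "t \<in> S" "\<bar>t - x\<bar> < min (d1 / 2) d2"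
    have n: "norm ((t, u t) - (x, u x)) \<le> \<bar>t - x\<bar> + \<bar>u t - u x\<bar>"
      using norm_Pair_le[of "t - x" "u t - u x"] by simp
    then have "norm ((t, u t) - (x, u x)) < d1"
      using close[OF t(1)] t by simp
    from lin[OF this] have "\<bar>M t * D (u t) - M x * D (u x) - m * D (u x) * (t - x) - M x * d * (u t - u x)\<bar>
        \<le> \<eta> * norm ((t, u t) - (x, u x))"
      by (simp add: algebra_simps)
    also have "\<dots> \<le> \<eta> * (\<bar>t - x\<bar> + \<bar>u t - u x\<bar>)"
      using n \<eta> by (intro mult_left_mono) auto
    finally show "\<bar>M t * D (u t) - M x * D (u x) - m * D (u x) * (t - x) - M x * d * (u t - u x)\<bar>
        \<le> \<eta> * (\<bar>t - x\<bar> + \<bar>u t - u x\<bar>)" .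
  qed (use d1 d2 in auto)
qed

definition weak_derivative_on :: "real \<Rightarrow> real \<Rightarrow> (real \<Rightarrow> real) \<Rightarrow> (real \<Rightarrow> real) \<Rightarrow> bool" where
  "weak_derivative_on x0 x1 u g \<longleftrightarrow> g absolutely_integrable_on {x0..x1} \<and>
     (\<forall>x y. x0 \<le> x \<longrightarrow> x \<le> y \<longrightarrow> y \<le> x1 \<longrightarrow> u y - u x = integral {x..y} g)"

lemma weak_derivative_on_subinterval:
  "weak_derivative_on x0 x1 u g \<Longrightarrow> x0 \<le> a \<Longrightarrow> b \<le> x1 \<Longrightarrow> weak_derivative_on a b u g"
  unfolding weak_derivative_on_def by (auto intro: absolutely_integrable_on_subinterval)

lemma weak_derivative_on_integrable:
  assumes "weak_derivative_on x0 x1 u g"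
  shows "g integrable_on {x0..x1}" "(\<lambda>x. \<bar>g x\<bar>) integrable_on {x0..x1}"
  using assms by (auto simp: weak_derivative_on_def absolutely_integrable_on_def)

lemma weak_derivative_on_continuous:
  assumes "weak_derivative_on x0 x1 u g"
  shows "continuous_on {x0..x1} u"
proof -
  have "continuous_on {x0..x1} (\<lambda>x. u x0 + integral {x0..x} g)"
    by (intro continuous_intros indefinite_integral_continuous_1 weak_derivative_on_integrable[OF assms])
  moreover have "u x0 + integral {x0..x} g = u x" if "x \<in> {x0..x1}" for x
  proof -
    have "u x - u x0 = integral {x0..x} g"
      using assms that unfolding weak_derivative_on_def by auto
    then show ?thesis
      by simp
  qed
  ultimately show ?thesis
    by (rule continuous_on_eq)
qed

lemma weak_derivative_on_increments_le:
  assumes u: "weak_derivative_on a b u g" and x: "a \<le> x" "x \<le> b"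
  shows "\<bar>u b - u x\<bar> + \<bar>u x - u a\<bar> \<le> integral {a..b} (\<lambda>t. \<bar>g t\<bar>)"
proof -
  note int = weak_derivative_on_integrable[OF u]
  have step: "\<bar>u y - u z\<bar> \<le> integral {z..y} (\<lambda>t. \<bar>g t\<bar>)" if "a \<le> z" "z \<le> y" "y \<le> b" for y z
  proof -
    have "u y - u z = integral {z..y} g"
      using u that by (auto simp: weak_derivative_on_def)
    moreover have "norm (integral {z..y} g) \<le> integral {z..y} (\<lambda>t. \<bar>g t\<bar>)"
      using that by (intro integral_norm_bound_integral integrable_subinterval_real[OF int(1)]
                             integrable_subinterval_real[OF int(2)]) auto
    ultimately show ?thesis
      by simp
  qed
  have "integral {a..x} (\<lambda>t. \<bar>g t\<bar>) + integral {x..b} (\<lambda>t. \<bar>g t\<bar>) = integral {a..b} (\<lambda>t. \<bar>g t\<bar>)"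
    using Henstock_Kurzweil_Integration.integral_combine[OF x int(2)] .
  then show ?thesis
    using step[of x b] step[of a x] x by linarith
qed

lemma frozen_coefficients_le:
  fixes c1 c2 g f :: "real \<Rightarrow> real"
  assumes c1: "continuous (at x within S) c1" and c2: "continuous (at x within S) c2" and \<eta>: "\<eta> > 0"
    and bound: "\<And>t. t \<in> S \<Longrightarrow> c1 t + c2 t * g t \<le> f t"
  shows "\<exists>\<delta>>0. \<forall>t\<in>S. \<bar>t - x\<bar> < \<delta> \<longrightarrow> c1 x + c2 x * g t \<le> f t + \<eta> * (1 + \<bar>g t\<bar>)"
proof -
  obtain d1 where d1: "d1 > 0" and near1: "\<And>t. t \<in> S \<Longrightarrow> \<bar>t - x\<bar> < d1 \<Longrightarrow> \<bar>c1 t - c1 x\<bar> < \<eta>"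
    using c1 \<eta> unfolding continuous_within_eps_delta dist_real_def by blast
  obtain d2 where d2: "d2 > 0" and near2: "\<And>t. t \<in> S \<Longrightarrow> \<bar>t - x\<bar> < d2 \<Longrightarrow> \<bar>c2 t - c2 x\<bar> < \<eta>"
    using c2 \<eta> unfolding continuous_within_eps_delta dist_real_def by blast
  show ?thesis
  proof (intro exI[of _ "min d1 d2"] conjI ballI impI)
    fix t assume t: "t \<in> S" "\<bar>t - x\<bar> < min d1 d2"
    have "\<bar>c2 x * g t - c2 t * g t\<bar> = \<bar>c2 t - c2 x\<bar> * \<bar>g t\<bar>"
      by (simp add: abs_mult abs_minus_commute left_diff_distrib[symmetric])
    also have "\<dots> \<le> \<eta> * \<bar>g t\<bar>"
      using near2 t by (intro mult_right_mono) (auto simp: less_imp_le)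
    finally have "c2 x * g t \<le> c2 t * g t + \<eta> * \<bar>g t\<bar>"
      unfolding abs_le_iff by linarith
    moreover have "c1 x \<le> c1 t + \<eta>"
      using near1 t unfolding abs_less_iff by fastforce
    ultimately show "c1 x + c2 x * g t \<le> f t + \<eta> * (1 + \<bar>g t\<bar>)"
      using bound[OF t(1)] by (simp add: distrib_left)
  qed (use d1 d2 in auto)
qed

lemma increment_le_integral_of_linearization:
  fixes W u g f :: "real \<Rightarrow> real"
  assumes u: "weak_derivative_on a b u g" and f: "f integrable_on {a..b}" and x: "a \<le> x" "x \<le> b"
    and lin: "\<And>t. t \<in> {a, b} \<Longrightarrow>
               \<bar>W t - W x - \<alpha> * (t - x) - \<beta> * (u t - u x)\<bar> \<le> \<eta> / 2 * (\<bar>t - x\<bar> + \<bar>u t - u x\<bar>)"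
    and frozen: "\<And>t. t \<in> {a..b} \<Longrightarrow> \<alpha> + \<beta> * g t \<le> f t + \<eta> / 2 * (1 + \<bar>g t\<bar>)" and \<eta>: "\<eta> > 0"
  shows "W b - W a \<le> integral {a..b} (\<lambda>t. f t + \<eta> * (1 + \<bar>g t\<bar>))"
proof -
  note int = weak_derivative_on_integrable[OF u]
  have lin_int: "((\<lambda>t. \<alpha> + \<beta> * g t + \<eta> / 2 * (1 + \<bar>g t\<bar>)) has_integral
      (\<alpha> * (b - a) + \<beta> * integral {a..b} g + \<eta> / 2 * ((b - a) + integral {a..b} (\<lambda>t. \<bar>g t\<bar>)))) {a..b}"
    using x has_integral_const_real[of \<alpha> a b] has_integral_const_real[of "1::real" a b]
    by (intro has_integral_add has_integral_mult_right integrable_integral int) (auto simp: mult.commute)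
  have "W b - W a \<le> \<alpha> * (b - a) + \<beta> * (u b - u a) + \<eta> / 2 * ((b - a) + (\<bar>u b - u x\<bar> + \<bar>u x - u a\<bar>))"
    using lin[of a] lin[of b] x by (simp add: abs_le_iff abs_minus_commute[of "u a"] algebra_simps)
  also have "\<dots> \<le> \<alpha> * (b - a) + \<beta> * integral {a..b} g + \<eta> / 2 * ((b - a) + integral {a..b} (\<lambda>t. \<bar>g t\<bar>))"
    using weak_derivative_on_increments_le[OF u x] u \<eta> x
    by (auto simp: weak_derivative_on_def intro!: mult_left_mono)
  also have "\<dots> \<le> integral {a..b} (\<lambda>t. f t + \<eta> * (1 + \<bar>g t\<bar>))"
  proof (rule has_integral_le[OF lin_int integrable_integral])
    show "(\<lambda>t. f t + \<eta> * (1 + \<bar>g t\<bar>)) integrable_on {a..b}"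
      using int f by (intro integrable_add integrable_on_mult_right integrable_const_ivl) auto
    show "\<alpha> + \<beta> * g t + \<eta> / 2 * (1 + \<bar>g t\<bar>) \<le> f t + \<eta> * (1 + \<bar>g t\<bar>)" if "t \<in> {a..b}" for t
      using frozen[OF that] by (auto simp: field_simps)
  qed
  finally show ?thesis .
qed

lemma chain_rule_local_bound:
  fixes M M' D d u g f :: "real \<Rightarrow> real"
  assumes dM: "\<And>x. (M has_real_derivative M' x) (at x)" and dD: "\<And>s. (D has_real_derivative d s) (at s)"
    and cM': "continuous_on {x0..x1} M'" and cd: "continuous_on UNIV d"
    and u: "weak_derivative_on x0 x1 u g" and f: "f integrable_on {x0..x1}"
    and bound: "\<And>t. t \<in> {x0..x1} \<Longrightarrow> M' t * D (u t) + M t * d (u t) * g t \<le> f t"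
    and x: "x \<in> {x0..x1}" and \<eta>: "\<eta> > 0"
  shows "\<exists>\<delta>>0. \<forall>a b. x0 \<le> a \<and> a \<le> x \<and> x \<le> b \<and> b \<le> x1 \<and> b - a < \<delta> \<longrightarrow>
           M b * D (u b) - M a * D (u a) \<le> integral {a..b} (\<lambda>t. f t + \<eta> * (1 + \<bar>g t\<bar>))"
proof -
  define c1 where "c1 t = M' t * D (u t)" for t
  define c2 where "c2 t = M t * d (u t)" for t
  have cu: "continuous_on {x0..x1} u"
    by (rule weak_derivative_on_continuous[OF u])
  have cD: "continuous_on UNIV D" and cM: "continuous_on UNIV M"
    using dD dM by (meson DERIV_isCont continuous_at_imp_continuous_on)+
  have "continuous (at x within {x0..x1}) u"
    using cu x by (simp add: continuous_on_eq_continuous_within)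
  from product_composition_linearization[OF dM dD this half_gt_zero[OF \<eta>]]
  obtain d1 where d1: "d1 > 0" and lin: "\<And>t. t \<in> {x0..x1} \<Longrightarrow> \<bar>t - x\<bar> < d1 \<Longrightarrow>
      \<bar>M t * D (u t) - M x * D (u x) - c1 x * (t - x) - c2 x * (u t - u x)\<bar> \<le> \<eta> / 2 * (\<bar>t - x\<bar> + \<bar>u t - u x\<bar>)"
    unfolding c1_def c2_def by blast
  have "continuous_on {x0..x1} c1" "continuous_on {x0..x1} c2"
    unfolding c1_def c2_def
    by (intro continuous_intros cM' continuous_on_compose2[OF cD cu] continuous_on_compose2[OF cd cu]
          continuous_on_subset[OF cM]; simp)+
  then have "continuous (at x within {x0..x1}) c1" "continuous (at x within {x0..x1}) c2"
    using x by (simp_all add: continuous_on_eq_continuous_within)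
  moreover have "c1 t + c2 t * g t \<le> f t" if "t \<in> {x0..x1}" for t
    using bound[OF that] by (simp add: c1_def c2_def)
  ultimately obtain d2 where d2: "d2 > 0" and frozen: "\<And>t. t \<in> {x0..x1} \<Longrightarrow> \<bar>t - x\<bar> < d2 \<Longrightarrow>
      c1 x + c2 x * g t \<le> f t + \<eta> / 2 * (1 + \<bar>g t\<bar>)"
    using frozen_coefficients_le[of x "{x0..x1}" c1 c2 "\<eta> / 2" g f] \<eta> by auto
  show ?thesis
  proof (intro exI[of _ "min d1 d2"] conjI allI impI)
    fix a b assume ab: "x0 \<le> a \<and> a \<le> x \<and> x \<le> b \<and> b \<le> x1 \<and> b - a < min d1 d2"
    have "weak_derivative_on a b u g" "f integrable_on {a..b}"
      using weak_derivative_on_subinterval[OF u] integrable_subinterval_real[OF f] ab by auto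
    moreover have "\<bar>M t * D (u t) - M x * D (u x) - c1 x * (t - x) - c2 x * (u t - u x)\<bar>
        \<le> \<eta> / 2 * (\<bar>t - x\<bar> + \<bar>u t - u x\<bar>)" if "t \<in> {a, b}" for t
      using that ab by (intro lin) auto
    moreover have "c1 x + c2 x * g t \<le> f t + \<eta> / 2 * (1 + \<bar>g t\<bar>)" if "t \<in> {a..b}" for t
      using that ab by (intro frozen) auto
    ultimately show "M b * D (u b) - M a * D (u a) \<le> integral {a..b} (\<lambda>t. f t + \<eta> * (1 + \<bar>g t\<bar>))"
      using ab \<eta> by (intro increment_le_integral_of_linearization[where W = "\<lambda>t. M t * D (u t)"]) auto
  qed (use d1 d2 in auto)
qed

text \<open>Since \<open>u\<close> is only absolutely continuous, the fundamental theorem of calculus is replaced by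
  gluing local linearisations (Bolzano bisection) whose error \<open>\<eta>\<close> is then sent to \<open>0\<close>.\<close>
lemma chain_rule_increment_le:
  fixes M M' D d u g f :: "real \<Rightarrow> real"
  assumes x01: "x0 \<le> x1"
    and dM: "\<And>x. (M has_real_derivative M' x) (at x)" and dD: "\<And>s. (D has_real_derivative d s) (at s)"
    and cM': "continuous_on {x0..x1} M'" and cd: "continuous_on UNIV d"
    and u: "weak_derivative_on x0 x1 u g" and f: "f integrable_on {x0..x1}"
    and bound: "\<And>t. t \<in> {x0..x1} \<Longrightarrow> M' t * D (u t) + M t * d (u t) * g t \<le> f t"
  shows "M x1 * D (u x1) - M x0 * D (u x0) \<le> integral {x0..x1} f"
proof -
  have gi: "(\<lambda>t. 1 + \<bar>g t\<bar>) integrable_on {x0..x1}"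
    using weak_derivative_on_integrable(2)[OF u] by (intro integrable_add integrable_const_ivl)
  define K where "K = integral {x0..x1} (\<lambda>t. 1 + \<bar>g t\<bar>)"
  have K: "K \<ge> 0"
    unfolding K_def using gi by (intro integral_nonneg) auto
  have approx: "M x1 * D (u x1) - M x0 * D (u x0) \<le> integral {x0..x1} f + \<eta> * K" if "\<eta> > 0" for \<eta>
  proof -
    have \<eta>gi: "(\<lambda>t. \<eta> * (1 + \<bar>g t\<bar>)) integrable_on {x0..x1}"
      using gi by (rule integrable_on_mult_right)
    have "M x1 * D (u x1) - M x0 * D (u x0) \<le> integral {x0..x1} (\<lambda>t. f t + \<eta> * (1 + \<bar>g t\<bar>))"
      by (rule increment_le_integral_of_local[OF x01 integrable_add[OF f \<eta>gi]
            chain_rule_local_bound[OF dM dD cM' cd u f bound _ that]])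
    also have "\<dots> = integral {x0..x1} f + \<eta> * K"
      using f \<eta>gi by (simp add: K_def integral_add)
    finally show ?thesis .
  qed
  show ?thesis
  proof (rule field_le_epsilon)
    fix e :: real assume e: "e > 0"
    have "e / (K + 1) * K \<le> e"
      using K e by (simp add: field_simps)
    then show "M x1 * D (u x1) - M x0 * D (u x0) \<le> integral {x0..x1} f + e"
      using approx[of "e / (K + 1)"] K e by simp
  qed
qed

section \<open>Energy density and calibrations\<close>

definition energy_density :: "real \<Rightarrow> real \<Rightarrow> real \<Rightarrow> real \<Rightarrow> real" where
  "energy_density p \<epsilon> s t = \<epsilon> powr (p - 1) * \<bar>t\<bar> powr p / p + Fpot p s / \<epsilon>"

definition local_energy :: "real \<Rightarrow> real \<Rightarrow> (real \<Rightarrow> real) \<Rightarrow> (real \<Rightarrow> real) \<Rightarrow> real \<Rightarrow> real \<Rightarrow> real" where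
  "local_energy p \<epsilon> u g x y = integral {x..y} (\<lambda>t. energy_density p \<epsilon> (u t) (g t))"

lemma energy_density_nonneg: "p > 1 \<Longrightarrow> \<epsilon> > 0 \<Longrightarrow> energy_density p \<epsilon> s t \<ge> 0"
  unfolding energy_density_def using Fpot_nonneg[of p s] by (intro add_nonneg_nonneg divide_nonneg_pos) auto

lemma energy_density_minus [simp]:
  "energy_density p \<epsilon> (- s) t = energy_density p \<epsilon> s t"
  "energy_density p \<epsilon> s (- t) = energy_density p \<epsilon> s t"
  by (simp_all add: energy_density_def)

lemma local_energy_nonneg:
  assumes "p > 1" "\<epsilon> > 0"
  shows "local_energy p \<epsilon> u g a b \<ge> 0"
proof (cases "(\<lambda>t. energy_density p \<epsilon> (u t) (g t)) integrable_on {a..b}")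
  case True
  then show ?thesis
    unfolding local_energy_def by (rule integral_nonneg) (simp add: energy_density_nonneg[OF assms])
next
  case False
  then show ?thesis
    by (simp add: local_energy_def not_integrable_integral)
qed

lemma local_energy_mono:
  assumes "p > 1" "\<epsilon> > 0" "(\<lambda>t. energy_density p \<epsilon> (u t) (g t)) integrable_on {x0..x1}"
    "x0 \<le> a" "a \<le> b" "b \<le> x1"
  shows "local_energy p \<epsilon> u g a b \<le> local_energy p \<epsilon> u g x0 x1"
  unfolding local_energy_def using assms
  by (intro integral_subset_le integrable_subinterval_real[OF assms(3)]) (auto intro: energy_density_nonneg)

lemma local_energy_combine:
  assumes "(\<lambda>t. energy_density p \<epsilon> (u t) (g t)) integrable_on {x0..x1}"
    "x0 \<le> a" "a \<le> b" "b \<le> c" "c \<le> x1"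
  shows "local_energy p \<epsilon> u g a b + local_energy p \<epsilon> u g b c = local_energy p \<epsilon> u g a c"
  unfolding local_energy_def using assms
  by (intro Henstock_Kurzweil_Integration.integral_combine integrable_subinterval_real[OF assms(1)]) auto

text \<open>Young's inequality with exponents \<open>p\<close> and \<open>p / (p - 1)\<close>, the weight \<open>M\<close> borrowing the
  fraction \<open>\<bar>M\<bar> powr (p / (p - 1))\<close> of the potential term.\<close>
lemma energy_density_ge_calibration:
  assumes p: "p > 1" and \<epsilon>: "\<epsilon> > 0"
    and h: "\<epsilon> * m' * D \<le> (1 - \<bar>M\<bar> powr (p / (p - 1))) * Fpot p s"
  shows "m' * D + M * phi p s * t \<le> energy_density p \<epsilon> s t"
proof -
  define q where "q = p / (p - 1)"
  have q: "q > 1" "1 / p + 1 / q = 1"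
    using p by (auto simp: q_def field_simps)
  define X where "X = \<epsilon> powr ((p - 1) / p) * \<bar>t\<bar>"
  define Y where "Y = \<bar>M\<bar> * phi p s * \<epsilon> powr (- ((p - 1) / p))"
  have "\<epsilon> powr ((p - 1) / p) * \<epsilon> powr (- ((p - 1) / p)) = 1"
    using \<epsilon> by (simp add: powr_add[symmetric])
  then have XY: "X * Y = \<bar>M\<bar> * phi p s * \<bar>t\<bar>"
    unfolding X_def Y_def by (simp add: algebra_simps)
  have Xp: "X powr p = \<epsilon> powr (p - 1) * \<bar>t\<bar> powr p"
    using p unfolding X_def by (simp add: powr_mult powr_powr)
  have "(\<epsilon> powr (- ((p - 1) / p))) powr q = \<epsilon> powr (-1)"
    using p by (simp add: powr_powr q_def field_simps)
  then have Yq: "Y powr q = \<bar>M\<bar> powr q * (q * Fpot p s) / \<epsilon>"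
    using \<epsilon> phi_powr_conjugate[OF p, of s]
    by (simp add: Y_def q_def powr_mult powr_minus divide_inverse)
  have "M * phi p s * t \<le> X * Y"
    unfolding XY using phi_nonneg[of p s] by (metis abs_ge_self abs_mult abs_of_nonneg)
  also have "\<dots> \<le> X powr p / p + Y powr q / q"
    using Youngs_inequality[OF p q] by (simp add: X_def Y_def phi_nonneg)
  also have "\<dots> = \<epsilon> powr (p - 1) * \<bar>t\<bar> powr p / p + \<bar>M\<bar> powr q * Fpot p s / \<epsilon>"
    using q by (simp add: Xp Yq)
  finally have "M * phi p s * t \<le> \<epsilon> powr (p - 1) * \<bar>t\<bar> powr p / p + \<bar>M\<bar> powr q * Fpot p s / \<epsilon>" .
  moreover have "m' * D \<le> (1 - \<bar>M\<bar> powr q) * Fpot p s / \<epsilon>"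
    using h \<epsilon> unfolding q_def by (simp add: field_simps mult.assoc)
  ultimately show ?thesis
    unfolding energy_density_def by (simp add: diff_divide_distrib left_diff_distrib)
qed

lemma local_energy_ge_calibration:
  assumes p: "p > 1" and \<epsilon>: "\<epsilon> > 0" and x01: "x0 \<le> x1" and u: "weak_derivative_on x0 x1 u g"
    and fi: "(\<lambda>t. energy_density p \<epsilon> (u t) (g t)) integrable_on {x0..x1}"
    and dM: "\<And>x. (M has_real_derivative M' x) (at x)" and cM': "continuous_on {x0..x1} M'"
    and h: "\<And>x. x \<in> {x0..x1} \<Longrightarrow>
              \<epsilon> * M' x * (Phi p (u x) - Phi p 1) \<le> (1 - \<bar>M x\<bar> powr (p / (p - 1))) * Fpot p (u x)"
  shows "M x1 * (Phi p (u x1) - Phi p 1) - M x0 * (Phi p (u x0) - Phi p 1) \<le> local_energy p \<epsilon> u g x0 x1"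
  unfolding local_energy_def
proof (rule chain_rule_increment_le[OF x01 dM _ cM' continuous_on_phi[OF p] u fi])
  show "((\<lambda>s. Phi p s - Phi p 1) has_real_derivative phi p s) (at s)" for s
    using DERIV_diff[OF Phi_has_derivative[OF p] DERIV_const] by simp
  show "M' x * (Phi p (u x) - Phi p 1) + M x * phi p (u x) * g x \<le> energy_density p \<epsilon> (u x) (g x)"
    if "x \<in> {x0..x1}" for x
    using energy_density_ge_calibration[OF p \<epsilon> h[OF that]] by (simp add: mult.assoc)
qed

lemma Phi_increment_le_local_energy:
  assumes p: "p > 1" and \<epsilon>: "\<epsilon> > 0" and x01: "x0 \<le> x1" and u: "weak_derivative_on x0 x1 u g"
    and fi: "(\<lambda>t. energy_density p \<epsilon> (u t) (g t)) integrable_on {x0..x1}"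
  shows "\<bar>Phi p (u x1) - Phi p (u x0)\<bar> \<le> local_energy p \<epsilon> u g x0 x1"
proof -
  have "\<sigma> * (Phi p (u x1) - Phi p 1) - \<sigma> * (Phi p (u x0) - Phi p 1) \<le> local_energy p \<epsilon> u g x0 x1"
    if "\<bar>\<sigma>\<bar> = 1" for \<sigma>
    by (rule local_energy_ge_calibration[OF p \<epsilon> x01 u fi, where M' = "\<lambda>_. 0"])
       (use that in \<open>auto intro!: derivative_eq_intros\<close>)
  from this[of 1] this[of "-1"] show ?thesis
    by (simp add: abs_le_iff algebra_simps)
qed

lemma weak_derivative_on_point_reflect:
  assumes "weak_derivative_on a b u g"
  shows "weak_derivative_on (- b) (- a) (\<lambda>x. - u (- x)) (\<lambda>x. g (- x))"
  unfolding weak_derivative_on_def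
proof (intro conjI allI impI)
  show "(\<lambda>x. g (- x)) absolutely_integrable_on {- b..- a}"
    using assms by (simp add: weak_derivative_on_def)
  fix x y assume "- b \<le> x" "x \<le> y" "y \<le> - a"
  then have "u (- x) - u (- y) = integral {- y..- x} g"
    using assms by (simp add: weak_derivative_on_def)
  then show "- u (- y) - - u (- x) = integral {x..y} (\<lambda>x. g (- x))"
    using Henstock_Kurzweil_Integration.integral_reflect_real[of "- x" "- y" g] by simp
qed

lemma local_energy_point_reflect:
  "local_energy p \<epsilon> (\<lambda>x. - u (- x)) (\<lambda>x. g (- x)) (- b) (- a) = local_energy p \<epsilon> u g a b"
  unfolding local_energy_def
  using Henstock_Kurzweil_Integration.integral_reflect_real[of b a "\<lambda>t. energy_density p \<epsilon> (u t) (g t)"]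
  by simp

lemma weak_derivative_on_sign:
  assumes "\<sigma> \<in> {-1, 1}" "weak_derivative_on x0 x1 u g"
  shows "weak_derivative_on x0 x1 (\<lambda>x. \<sigma> * u x) (\<lambda>x. \<sigma> * g x)"
proof -
  have "g integrable_on {x0..x1}" "(\<lambda>x. \<bar>g x\<bar>) integrable_on {x0..x1}"
    "\<And>x y. x0 \<le> x \<Longrightarrow> x \<le> y \<Longrightarrow> y \<le> x1 \<Longrightarrow> integral {x..y} g = u y - u x"
    using assms(2) unfolding weak_derivative_on_def absolutely_integrable_on_def by auto
  then show ?thesis
    using assms(1) unfolding weak_derivative_on_def absolutely_integrable_on_def
    by (auto intro!: integrable_neg)
qed

lemma energy_density_sign [simp]:
  "\<sigma> \<in> {-1, 1} \<Longrightarrow> energy_density p \<epsilon> (\<sigma> * s) (\<sigma> * t) = energy_density p \<epsilon> s t"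
  by (elim insertE) simp_all

lemma prim_eq_integral:
  assumes "set_integrable lborel {a..b} w" "x \<in> {a..b}"
  shows "prim a w x = integral {a..x} w"
  unfolding prim_def using assms
  by (intro set_borel_integral_eq_integral(2) set_integrable_subset[OF assms(1)]) auto

lemma weak_derivative_on_if_H1_with_deriv:
  assumes "H1_with_deriv a b u g"
  shows "weak_derivative_on a b u g"
proof -
  have g: "set_integrable lborel {a..b} g"
    and u: "\<And>x. x \<in> {a..b} \<Longrightarrow> u x = u a + (\<integral> y\<in>{a..x}. g y \<partial>lborel)"
    using assms unfolding H1_with_deriv_def by blast+
  have gI: "g integrable_on {a..b}"
    by (rule set_borel_integral_eq_integral(1)[OF g])
  have "g absolutely_integrable_on {a..b}"
    using gI set_borel_integral_eq_integral(1)[OF set_integrable_abs[OF g]]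
    by (simp add: absolutely_integrable_on_def)
  moreover have "u y - u x = integral {x..y} g" if "a \<le> x" "x \<le> y" "y \<le> b" for x y
  proof -
    have "u x = u a + integral {a..x} g" "u y = u a + integral {a..y} g"
      using that u[of x] u[of y] prim_eq_integral[OF g, of x, unfolded prim_def]
        prim_eq_integral[OF g, of y, unfolded prim_def] by simp_all
    moreover have "integral {a..x} g + integral {x..y} g = integral {a..y} g"
      using that by (intro Henstock_Kurzweil_Integration.integral_combine integrable_subinterval_real[OF gI]) auto
    ultimately show ?thesis
      by linarith
  qed
  ultimately show ?thesis
    by (simp add: weak_derivative_on_def)
qed

lemma energy_ge_if_local_energy_ge:
  assumes p: "p > 1" and \<epsilon>: "\<epsilon> > 0" and g: "g \<in> borel_measurable borel" and u: "continuous_on {a..b} u"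
    and bound: "(\<lambda>t. energy_density p \<epsilon> (u t) (g t)) integrable_on {a..b} \<Longrightarrow> X \<le> local_energy p \<epsilon> u g a b"
  shows "ennreal X \<le> energy p a b \<epsilon> u g"
proof (cases "energy p a b \<epsilon> u g = \<infinity>")
  case False
  define f where "f x = indicator {a..b} x *\<^sub>R energy_density p \<epsilon> (u x) (g x)" for x
  have m1: "(\<lambda>x. indicator {a..b} x * (\<epsilon> powr (p - 1) * \<bar>g x\<bar> powr p / p)) \<in> borel_measurable lborel"
    using g by measurable
  have cF: "continuous_on {a..b} (\<lambda>x. Fpot p (u x) / \<epsilon>)"
    using continuous_on_compose2[OF continuous_on_Fpot u] p \<epsilon> by (intro continuous_intros) auto
  have m2: "(\<lambda>x. indicator {a..b} x *\<^sub>R (Fpot p (u x) / \<epsilon>)) \<in> borel_measurable lborel"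
    using borel_measurable_continuous_on_indicator[OF _ cF] by simp
  have f_split: "f = (\<lambda>x. indicator {a..b} x * (\<epsilon> powr (p - 1) * \<bar>g x\<bar> powr p / p)
                 + indicator {a..b} x *\<^sub>R (Fpot p (u x) / \<epsilon>))"
    by (auto simp: f_def energy_density_def fun_eq_iff indicator_def)
  have fm: "f \<in> borel_measurable lborel"
    unfolding f_split using m1 m2 by measurable
  have f_nonneg: "f x \<ge> 0" for x
    unfolding f_def using energy_density_nonneg[OF p \<epsilon>] by (simp add: indicator_def)
  have energy: "energy p a b \<epsilon> u g = (\<integral>\<^sup>+ x. ennreal (f x) \<partial>lborel)"
    unfolding energy_def f_def energy_density_def
    by (rule nn_integral_cong) (simp add: indicator_def)
  have f_int: "integrable lborel f"
  proof (rule integrableI_bounded[OF fm])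
    have "(\<integral>\<^sup>+ x. ennreal (norm (f x)) \<partial>lborel) = (\<integral>\<^sup>+ x. ennreal (f x) \<partial>lborel)"
      using f_nonneg by (intro nn_integral_cong) simp
    then show "(\<integral>\<^sup>+ x. ennreal (norm (f x)) \<partial>lborel) < \<infinity>"
      using False energy by (simp add: less_top)
  qed
  then have si: "set_integrable lborel {a..b} (\<lambda>t. energy_density p \<epsilon> (u t) (g t))"
    unfolding set_integrable_def f_def by simp
  have "energy p a b \<epsilon> u g = ennreal (integral\<^sup>L lborel f)"
    unfolding energy by (rule nn_integral_eq_integral[OF f_int]) (simp add: f_nonneg)
  also have "integral\<^sup>L lborel f = local_energy p \<epsilon> u g a b"
    using set_borel_integral_eq_integral(2)[OF si]
    by (simp add: local_energy_def set_lebesgue_integral_def f_def[abs_def])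
  finally show ?thesis
    using bound[OF set_borel_integral_eq_integral(1)[OF si]] by (simp add: ennreal_leI)
qed simp

lemma sum_local_energy_le:
  fixes h :: "nat \<Rightarrow> real"
  assumes p: "p > 1" and \<epsilon>: "\<epsilon> > 0"
    and fi: "(\<lambda>t. energy_density p \<epsilon> (u t) (g t)) integrable_on {a..b}"
    and windows: "\<And>i. 1 \<le> i \<Longrightarrow> i \<le> N \<Longrightarrow> a \<le> h i - r \<and> h i + r \<le> b"
    and disjoint: "\<And>i. 1 \<le> i \<Longrightarrow> i < N \<Longrightarrow> h i + r \<le> h (i + 1) - r" and r: "r \<ge> 0"
  shows "(\<Sum>i=1..N. local_energy p \<epsilon> u g (h i - r) (h i + r)) \<le> local_energy p \<epsilon> u g a b"
proof (cases "N = 0")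
  case False
  let ?E = "\<lambda>x y. local_energy p \<epsilon> u g x y"
  have "(\<Sum>i=1..m. ?E (h i - r) (h i + r)) \<le> ?E a (h m + r)" if "1 \<le> m" "m \<le> N" for m
    using that
  proof (induction m rule: nat_induct_at_least)
    case base
    have "?E (h 1 - r) (h 1 + r) \<le> ?E a (h 1 + r)"
      using windows[of 1] base r
      by (intro local_energy_mono[OF p \<epsilon> integrable_subinterval_real[OF fi]]) auto
    then show ?case
      by simp
  next
    case (Suc m)
    have w: "a \<le> h m - r" "h (Suc m) + r \<le> b" "h m + r \<le> h (Suc m) - r"
      using windows[of m] windows[of "Suc m"] disjoint[of m] Suc by auto
    have "?E a (h m + r) + ?E (h m + r) (h (Suc m) - r) = ?E a (h (Suc m) - r)"
      using w r by (intro local_energy_combine[OF fi]) auto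
    moreover have "?E a (h (Suc m) - r) + ?E (h (Suc m) - r) (h (Suc m) + r) = ?E a (h (Suc m) + r)"
      using w r by (intro local_energy_combine[OF fi]) auto
    moreover have "0 \<le> ?E (h m + r) (h (Suc m) - r)"
      by (rule local_energy_nonneg[OF p \<epsilon>])
    ultimately show ?case
      using Suc by simp
  qed
  also have "?E a (h N + r) \<le> ?E a b"
    using windows[of N] False r by (intro local_energy_mono[OF p \<epsilon> fi]) auto
  finally show ?thesis
    using False by simp
qed (simp add: local_energy_nonneg[OF p \<epsilon>])

section \<open>The energy of one transition\<close>

text \<open>\<open>[1 - 2 \<rho>, 1]\<close> is the neighbourhood of the well where \<open>Phi_deficit_le\<close> applies, \<open>B1\<close> is the
  weight where the exponential layer meets the linear one, and \<open>k\<close> is the exponential rate.\<close>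
locale transition_constants =
  fixes p \<rho> B1 k :: real
  assumes p: "p > 1" and \<rho>: "0 < \<rho>" "\<rho> \<le> 1/2" and B1: "0 < B1" "B1 < 1" and k: "k > 0"
    and rate: "\<And>B. B1 \<le> B \<Longrightarrow> B \<le> 1 \<Longrightarrow> k * well_ratio p \<rho> * (1 - B) \<le> 1 - B powr (p / (p - 1))"
begin

definition layer_width :: real where
  "layer_width = B1 * well_ratio p \<rho> / (1 - B1 powr (p / (p - 1)))"

definition well_gap :: real where
  "well_gap = Phi p 1 - Phi p (1 - 2 * \<rho>)"

definition tail_error :: "real \<Rightarrow> real \<Rightarrow> real" where
  "tail_error \<epsilon> L = (1 - B1) * exp (- k * (L - \<epsilon> * layer_width) / \<epsilon>) * well_gap"

lemma B1_powr_less_one: "B1 powr (p / (p - 1)) < 1"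
  using powr_less_mono2[of "p / (p - 1)" B1 1] p B1 by simp

lemma layer_width_pos: "layer_width > 0"
  using B1 B1_powr_less_one well_ratio_pos[OF p, of \<rho>] \<rho> by (simp add: layer_width_def)

lemma well_gap_pos: "well_gap > 0"
proof -
  obtain z where z: "1 - 2 * \<rho> < z" "z < 1" "well_gap = (2 * \<rho>) * phi p z"
    using MVT2[of "1 - 2 * \<rho>" 1 "Phi p" "phi p"] Phi_has_derivative[OF p] \<rho> by (auto simp: well_gap_def)
  then have "\<bar>1 - z\<^sup>2\<bar> > 0"
    using \<rho> by (simp add: abs_one_minus_square)
  then show ?thesis
    using z \<rho> phi_coeff_pos[OF p] by (simp add: phi_eq[OF p])
qed

lemma tail_error_nonneg: "tail_error \<epsilon> L \<ge> 0"
  using B1 well_gap_pos by (simp add: tail_error_def)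

lemma tail_error_antimono:
  assumes "\<epsilon> > 0" "L \<le> L'"
  shows "tail_error \<epsilon> L' \<le> tail_error \<epsilon> L"
proof -
  have "- k * (L' - \<epsilon> * layer_width) / \<epsilon> \<le> - k * (L - \<epsilon> * layer_width) / \<epsilon>"
    using assms k by (intro divide_right_mono) (auto simp: algebra_simps)
  then show ?thesis
    unfolding tail_error_def using B1 well_gap_pos by (intro mult_right_mono mult_left_mono) auto
qed

lemma weight_bound_near_well:
  assumes "1 - 2 * \<rho> \<le> s" "s \<le> 1" "c \<ge> 0" "c * well_ratio p \<rho> \<le> 1 - \<bar>M\<bar> powr (p / (p - 1))"
  shows "c * (Phi p 1 - Phi p s) \<le> (1 - \<bar>M\<bar> powr (p / (p - 1))) * Fpot p s"
proof -
  have "c * (Phi p 1 - Phi p s) \<le> c * well_ratio p \<rho> * Fpot p s"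
    using Phi_deficit_le[OF p \<rho> assms(1,2)] assms(3) by (simp add: mult_left_mono mult.assoc)
  also have "\<dots> \<le> (1 - \<bar>M\<bar> powr (p / (p - 1))) * Fpot p s"
    using assms(4) Fpot_nonneg[of p s] p by (intro mult_right_mono) auto
  finally show ?thesis .
qed

text \<open>Calibration with the weight decreasing linearly from \<open>B1\<close> at \<open>x0\<close> to \<open>0\<close> at \<open>x1\<close>.\<close>
lemma linear_layer_bound:
  assumes \<epsilon>: "\<epsilon> > 0" and x1: "x1 = x0 + \<epsilon> * layer_width"
    and u: "weak_derivative_on x0 x1 u g" and fi: "(\<lambda>t. energy_density p \<epsilon> (u t) (g t)) integrable_on {x0..x1}"
    and near: "\<And>x. x \<in> {x0..x1} \<Longrightarrow> 1 - 2 * \<rho> \<le> u x \<and> u x \<le> 1"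
  shows "B1 * (Phi p 1 - Phi p (u x0)) \<le> local_energy p \<epsilon> u g x0 x1"
proof -
  define c where "c = (1 - B1 powr (p / (p - 1))) / well_ratio p \<rho>"
  have c: "c > 0"
    using B1_powr_less_one well_ratio_pos[OF p, of \<rho>] \<rho> by (simp add: c_def)
  have width: "\<epsilon> * layer_width = \<epsilon> * B1 / c"
    using well_ratio_pos[OF p, of \<rho>] \<rho> by (simp add: layer_width_def c_def)
  define M where "M x = c * (x1 - x) / \<epsilon>" for x
  have "M x1 * (Phi p (u x1) - Phi p 1) - M x0 * (Phi p (u x0) - Phi p 1) \<le> local_energy p \<epsilon> u g x0 x1"
  proof (rule local_energy_ge_calibration[OF p \<epsilon> _ u fi, where M' = "\<lambda>_. - c / \<epsilon>"])
    show "x0 \<le> x1"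
      using x1 \<epsilon> layer_width_pos by simp
    show "(M has_real_derivative - c / \<epsilon>) (at x)" for x
      unfolding M_def using \<epsilon> by (auto intro!: derivative_eq_intros)
    fix x assume x: "x \<in> {x0..x1}"
    have "0 \<le> M x" "M x \<le> B1"
      using x x1 c \<epsilon> width by (auto simp: M_def field_simps)
    then have "\<bar>M x\<bar> powr (p / (p - 1)) \<le> B1 powr (p / (p - 1))"
      using p by (intro powr_mono2) auto
    then have "c * well_ratio p \<rho> \<le> 1 - \<bar>M x\<bar> powr (p / (p - 1))"
      using well_ratio_pos[OF p, of \<rho>] \<rho> by (simp add: c_def)
    from weight_bound_near_well[OF _ _ _ this] near[OF x] c
    show "\<epsilon> * (- c / \<epsilon>) * (Phi p (u x) - Phi p 1) \<le> (1 - \<bar>M x\<bar> powr (p / (p - 1))) * Fpot p (u x)"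
      using \<epsilon> by (simp add: algebra_simps)
  qed simp
  moreover have "M x1 = 0" "M x0 = B1"
    using x1 c \<epsilon> width by (auto simp: M_def)
  ultimately show ?thesis
    by (simp add: algebra_simps)
qed

text \<open>Calibration with the weight \<open>1 - (1 - B1) exp (- k (x1 - x) / \<epsilon>)\<close>, equal to \<open>B1\<close> at \<open>x1\<close>;
  the locale assumption \<open>rate\<close> is exactly its admissibility condition.\<close>
lemma exponential_layer_bound:
  assumes \<epsilon>: "\<epsilon> > 0" and x01: "x0 \<le> x1"
    and u: "weak_derivative_on x0 x1 u g" and fi: "(\<lambda>t. energy_density p \<epsilon> (u t) (g t)) integrable_on {x0..x1}"
    and near: "\<And>x. x \<in> {x0..x1} \<Longrightarrow> 1 - 2 * \<rho> \<le> u x \<and> u x \<le> 1"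
  shows "(1 - (1 - B1) * exp (- k * (x1 - x0) / \<epsilon>)) * (Phi p 1 - Phi p (u x0)) - B1 * (Phi p 1 - Phi p (u x1))
           \<le> local_energy p \<epsilon> u g x0 x1"
proof -
  define E where "E x = exp (- k * (x1 - x) / \<epsilon>)" for x
  define M where "M x = 1 - (1 - B1) * E x" for x
  have "M x1 * (Phi p (u x1) - Phi p 1) - M x0 * (Phi p (u x0) - Phi p 1) \<le> local_energy p \<epsilon> u g x0 x1"
  proof (rule local_energy_ge_calibration[OF p \<epsilon> x01 u fi, where M' = "\<lambda>x. - (1 - B1) * E x * (k / \<epsilon>)"])
    show "(M has_real_derivative - (1 - B1) * E x * (k / \<epsilon>)) (at x)" for x
      unfolding M_def E_def using \<epsilon> by (auto intro!: derivative_eq_intros simp: field_simps)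
    show "continuous_on {x0..x1} (\<lambda>x. - (1 - B1) * E x * (k / \<epsilon>))"
      unfolding E_def using \<epsilon> by (intro continuous_intros) auto
    fix x assume x: "x \<in> {x0..x1}"
    have "- k * (x1 - x) / \<epsilon> \<le> 0"
      using x k \<epsilon> by (simp add: divide_nonpos_pos)
    then have "0 < E x" "E x \<le> 1"
      by (auto simp: E_def)
    then have "(1 - B1) * E x \<le> 1 - B1" "0 \<le> (1 - B1) * E x"
      using B1 by (auto intro: mult_left_le)
    then have M: "B1 \<le> M x" "M x \<le> 1"
      unfolding M_def by linarith+
    then have "k * (1 - M x) * well_ratio p \<rho> \<le> 1 - \<bar>M x\<bar> powr (p / (p - 1))"
      using rate[OF M] B1 by (simp add: algebra_simps)
    from weight_bound_near_well[OF _ _ _ this] near[OF x] k M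
    show "\<epsilon> * (- (1 - B1) * E x * (k / \<epsilon>)) * (Phi p (u x) - Phi p 1)
        \<le> (1 - \<bar>M x\<bar> powr (p / (p - 1))) * Fpot p (u x)"
      using \<epsilon> by (simp add: M_def algebra_simps)
  qed
  moreover have "M x1 = B1"
    by (simp add: M_def E_def)
  ultimately show ?thesis
    by (simp add: M_def E_def algebra_simps)
qed

lemma near_well_bound:
  assumes \<epsilon>: "\<epsilon> > 0" and L: "\<epsilon> * layer_width \<le> L"
    and u: "weak_derivative_on z (z + L) u g" and fi: "(\<lambda>t. energy_density p \<epsilon> (u t) (g t)) integrable_on {z..z + L}"
    and near: "\<And>x. x \<in> {z..z + L} \<Longrightarrow> 1 - 2 * \<rho> \<le> u x \<and> u x \<le> 1"
  shows "Phi p 1 - Phi p (u z) - tail_error \<epsilon> L \<le> local_energy p \<epsilon> u g z (z + L)"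
proof -
  define y where "y = z + L - \<epsilon> * layer_width"
  have y: "z \<le> y" "y \<le> z + L"
    using L mult_pos_pos[OF \<epsilon> layer_width_pos] by (auto simp: y_def)
  have "(1 - (1 - B1) * exp (- k * (y - z) / \<epsilon>)) * (Phi p 1 - Phi p (u z)) - B1 * (Phi p 1 - Phi p (u y))
      \<le> local_energy p \<epsilon> u g z y"
    using y near by (intro exponential_layer_bound[OF \<epsilon>] weak_derivative_on_subinterval[OF u]
                           integrable_subinterval_real[OF fi]) auto
  moreover have "B1 * (Phi p 1 - Phi p (u y)) \<le> local_energy p \<epsilon> u g y (z + L)"
    using y near by (intro linear_layer_bound[OF \<epsilon>] weak_derivative_on_subinterval[OF u]
                           integrable_subinterval_real[OF fi]) (auto simp: y_def)
  moreover have "local_energy p \<epsilon> u g z y + local_energy p \<epsilon> u g y (z + L) = local_energy p \<epsilon> u g z (z + L)"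
    using y by (intro local_energy_combine[OF fi]) auto
  moreover have "(1 - B1) * exp (- k * (y - z) / \<epsilon>) * (Phi p 1 - Phi p (u z)) \<le> tail_error \<epsilon> L"
  proof -
    have "Phi p 1 - Phi p (u z) \<le> well_gap"
      using near[of z] y Phi_mono[OF p, of "1 - 2 * \<rho>" "u z"] by (auto simp: well_gap_def)
    moreover have "y - z = L - \<epsilon> * layer_width"
      by (simp add: y_def)
    ultimately show ?thesis
      unfolding tail_error_def using B1 by (simp add: mult_left_mono)
  qed
  ultimately show ?thesis
    by (simp add: algebra_simps)
qed

lemma right_transition_bound:
  assumes \<epsilon>: "\<epsilon> > 0" and L: "\<epsilon> * layer_width \<le> L"
    and u: "weak_derivative_on z (z + L) u g" and fi: "(\<lambda>t. energy_density p \<epsilon> (u t) (g t)) integrable_on {z..z + L}"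
    and uz: "1 - \<rho> \<le> u z"
  shows "Phi p 1 - Phi p (u z) - tail_error \<epsilon> L \<le> local_energy p \<epsilon> u g z (z + L)"
proof -
  have L0: "z \<le> z + L"
    using L mult_pos_pos[OF \<epsilon> layer_width_pos] by simp
  have reach: "\<bar>Phi p (u y) - Phi p (u z)\<bar> \<le> local_energy p \<epsilon> u g z (z + L)" if "y \<in> {z..z + L}" for y
  proof -
    have "\<bar>Phi p (u y) - Phi p (u z)\<bar> \<le> local_energy p \<epsilon> u g z y"
      using that by (intro Phi_increment_le_local_energy[OF p \<epsilon>] weak_derivative_on_subinterval[OF u]
                            integrable_subinterval_real[OF fi]) auto
    also have "\<dots> \<le> local_energy p \<epsilon> u g z (z + L)"
      using that by (intro local_energy_mono[OF p \<epsilon> fi]) auto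
    finally show ?thesis .
  qed
  consider (above) y where "y \<in> {z..z + L}" "1 \<le> u y"
    | (below) y where "y \<in> {z..z + L}" "u y \<le> 1 - 2 * \<rho>"
    | (near) "\<And>y. y \<in> {z..z + L} \<Longrightarrow> 1 - 2 * \<rho> \<le> u y \<and> u y \<le> 1"
    by (meson linear)
  then show ?thesis
  proof cases
    case above
    then show ?thesis
      using reach[of y] Phi_mono[OF p above(2)] tail_error_nonneg[of \<epsilon> L] by (auto simp: abs_le_iff)
  next
    case below
    then show ?thesis
      using reach[of y] Phi_mono[OF p below(2)] Phi_mono[OF p uz] Phi_top_increment_le_next[OF p \<rho>]
        tail_error_nonneg[of \<epsilon> L] by (auto simp: abs_le_iff)
  next
    case near
    then show ?thesis
      by (rule near_well_bound[OF \<epsilon> L u fi])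
  qed
qed

text \<open>The left half follows from the right one under the point reflection \<open>u \<mapsto> - u (- x)\<close>.\<close>
lemma transition_bound:
  assumes \<epsilon>: "\<epsilon> > 0" and L: "\<epsilon> * layer_width \<le> L"
    and w: "weak_derivative_on a b w g" and fi: "(\<lambda>t. energy_density p \<epsilon> (w t) (g t)) integrable_on {a..b}"
    and z: "a + L \<le> z0" "z0 \<le> z1" "z1 + L \<le> b"
    and wz: "w z0 \<le> - (1 - \<rho>)" "1 - \<rho> \<le> w z1"
  shows "c_const p - 2 * tail_error \<epsilon> L \<le> local_energy p \<epsilon> w g a b"
proof -
  have L0: "0 \<le> L"
    using L mult_pos_pos[OF \<epsilon> layer_width_pos] by simp
  define w' where "w' = (\<lambda>x. - w (- x))"
  have "Phi p 1 - Phi p (w' (- z0)) - tail_error \<epsilon> (z0 - a) \<le> local_energy p \<epsilon> w' (\<lambda>x. g (- x)) (- z0) (- z0 + (z0 - a))"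
  proof (rule right_transition_bound[OF \<epsilon>])
    show "\<epsilon> * layer_width \<le> z0 - a"
      using L z by simp
    show "weak_derivative_on (- z0) (- z0 + (z0 - a)) w' (\<lambda>x. g (- x))"
      using weak_derivative_on_point_reflect[OF weak_derivative_on_subinterval[OF w, of a z0]] z L0
      by (simp add: w'_def)
    show "(\<lambda>t. energy_density p \<epsilon> (w' t) (g (- t))) integrable_on {- z0..- z0 + (z0 - a)}"
      using integrable_subinterval_real[OF fi, of a z0] z L0
        Henstock_Kurzweil_Integration.integrable_reflect_real[where f = "\<lambda>t. energy_density p \<epsilon> (w t) (g t)" and a = a and b = z0]
      by (simp add: w'_def)
    show "1 - \<rho> \<le> w' (- z0)"
      using wz by (simp add: w'_def)
  qed
  then have left: "Phi p 1 + Phi p (w z0) - tail_error \<epsilon> L \<le> local_energy p \<epsilon> w g a z0"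
    using local_energy_point_reflect[where u = w and g = g and a = a and b = z0] tail_error_antimono[OF \<epsilon>, of L "z0 - a"] z
      Phi_minus[OF p]
    by (simp add: w'_def)
  have "Phi p 1 - Phi p (w z1) - tail_error \<epsilon> (b - z1) \<le> local_energy p \<epsilon> w g z1 (z1 + (b - z1))"
    using L z L0 wz
    by (intro right_transition_bound[OF \<epsilon>] weak_derivative_on_subinterval[OF w]
          integrable_subinterval_real[OF fi]) auto
  then have right: "Phi p 1 - Phi p (w z1) - tail_error \<epsilon> L \<le> local_energy p \<epsilon> w g z1 b"
    using tail_error_antimono[OF \<epsilon>, of L "b - z1"] z by simp
  have mid: "\<bar>Phi p (w z1) - Phi p (w z0)\<bar> \<le> local_energy p \<epsilon> w g z0 z1"
    using z L0 by (intro Phi_increment_le_local_energy[OF p \<epsilon>] weak_derivative_on_subinterval[OF w]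
                         integrable_subinterval_real[OF fi]) auto
  have "local_energy p \<epsilon> w g a z0 + local_energy p \<epsilon> w g z0 z1 + local_energy p \<epsilon> w g z1 b
      = local_energy p \<epsilon> w g a b"
    using z L0 local_energy_combine[OF fi, of a z0 z1] local_energy_combine[OF fi, of a z1 b] by simp
  then show ?thesis
    using left right mid c_const_eq_Phi[OF p] Phi_minus[OF p, of 1] by (simp add: abs_le_iff)
qed

lemma signed_transition_bound:
  assumes \<epsilon>: "\<epsilon> > 0" and L: "\<epsilon> * layer_width \<le> L"
    and w: "weak_derivative_on a b w g" and fi: "(\<lambda>t. energy_density p \<epsilon> (w t) (g t)) integrable_on {a..b}"
    and \<sigma>: "\<sigma> \<in> {-1, 1}" and z: "a + L \<le> z0" "z0 \<le> z1" "z1 + L \<le> b"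
    and wz: "\<sigma> * w z0 \<le> - (1 - \<rho>)" "1 - \<rho> \<le> \<sigma> * w z1"
  shows "c_const p - 2 * tail_error \<epsilon> L \<le> local_energy p \<epsilon> w g a b"
proof -
  have "c_const p - 2 * tail_error \<epsilon> L \<le> local_energy p \<epsilon> (\<lambda>x. \<sigma> * w x) (\<lambda>x. \<sigma> * g x) a b"
    using z wz fi \<sigma> by (intro transition_bound[OF \<epsilon> L] weak_derivative_on_sign[OF \<sigma> w]) auto
  then show ?thesis
    using \<sigma> by (simp add: local_energy_def)
qed

definition tail_constant :: real where
  "tail_constant = 2 * (1 - B1) * exp (k * layer_width) * well_gap"

lemma tail_constant_pos: "tail_constant > 0"
  using B1 well_gap_pos by (simp add: tail_constant_def)

lemma two_tail_error_le:
  assumes \<epsilon>: "\<epsilon> > 0" and rate: "A * p / 2 \<le> k * L"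
  shows "2 * tail_error \<epsilon> L \<le> tail_constant * exp (- A * p / (2 * \<epsilon>))"
proof -
  have "- k * (L - \<epsilon> * layer_width) / \<epsilon> = k * layer_width + - (k * L) / \<epsilon>"
    using \<epsilon> by (simp add: field_simps)
  then have "exp (- k * (L - \<epsilon> * layer_width) / \<epsilon>) = exp (k * layer_width) * exp (- (k * L) / \<epsilon>)"
    by (simp only: exp_add)
  moreover have "- (k * L) / \<epsilon> \<le> - A * p / (2 * \<epsilon>)"
    using rate \<epsilon> by (simp add: field_simps)
  ultimately have "exp (- k * (L - \<epsilon> * layer_width) / \<epsilon>) \<le> exp (k * layer_width) * exp (- A * p / (2 * \<epsilon>))"
    by simp
  then have "(1 - B1) * exp (- k * (L - \<epsilon> * layer_width) / \<epsilon>) * well_gap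
      \<le> (1 - B1) * (exp (k * layer_width) * exp (- A * p / (2 * \<epsilon>))) * well_gap"
    using B1 well_gap_pos by (intro mult_right_mono mult_left_mono) auto
  then show ?thesis
    by (simp add: tail_error_def tail_constant_def algebra_simps)
qed

lemma energy_lower_bound:
  fixes h \<sigma> :: "nat \<Rightarrow> real"
  assumes \<epsilon>: "0 < \<epsilon>" "\<epsilon> < L / layer_width" and rate: "A * p / 2 \<le> k * L"
    and H: "H1_with_deriv a b u g"
    and windows: "\<And>i. 1 \<le> i \<Longrightarrow> i \<le> N \<Longrightarrow> a \<le> h i - r \<and> h i + r \<le> b"
    and disjoint: "\<And>i. 1 \<le> i \<Longrightarrow> i < N \<Longrightarrow> h i + r \<le> h (i + 1) - r" and r: "r \<ge> 0"
    and \<sigma>: "\<And>i. \<sigma> i \<in> {-1, 1}"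
    and crossing: "\<And>i. 1 \<le> i \<Longrightarrow> i \<le> N \<Longrightarrow> \<exists>z0 z1. h i - r + L \<le> z0 \<and> z0 \<le> z1 \<and> z1 + L \<le> h i + r \<and>
                     \<sigma> i * u z0 \<le> - (1 - \<rho>) \<and> 1 - \<rho> \<le> \<sigma> i * u z1"
  shows "ennreal (real N * c_const p - real N * tail_constant * exp (- A * p / (2 * \<epsilon>))) \<le> energy p a b \<epsilon> u g"
proof -
  have u: "weak_derivative_on a b u g"
    by (rule weak_derivative_on_if_H1_with_deriv[OF H])
  have \<epsilon>L: "\<epsilon> * layer_width \<le> L"
    using \<epsilon> layer_width_pos by (simp add: field_simps)
  show ?thesis
  proof (rule energy_ge_if_local_energy_ge[OF p \<epsilon>(1) _ weak_derivative_on_continuous[OF u]])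
    show "g \<in> borel_measurable borel"
      using H by (simp add: H1_with_deriv_def)
    assume fi: "(\<lambda>t. energy_density p \<epsilon> (u t) (g t)) integrable_on {a..b}"
    have "c_const p - 2 * tail_error \<epsilon> L \<le> local_energy p \<epsilon> u g (h i - r) (h i + r)"
      if i: "1 \<le> i" "i \<le> N" for i
    proof -
      obtain z0 z1 where z: "h i - r + L \<le> z0" "z0 \<le> z1" "z1 + L \<le> h i + r"
        "\<sigma> i * u z0 \<le> - (1 - \<rho>)" "1 - \<rho> \<le> \<sigma> i * u z1"
        using crossing[OF i] by blast
      have "weak_derivative_on (h i - r) (h i + r) u g"
        "(\<lambda>t. energy_density p \<epsilon> (u t) (g t)) integrable_on {h i - r..h i + r}"
        using windows[OF i] weak_derivative_on_subinterval[OF u] integrable_subinterval_real[OF fi] by auto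
      then show ?thesis
        using z by (intro signed_transition_bound[OF \<epsilon>(1) \<epsilon>L _ _ \<sigma>]) auto
    qed
    then have "(\<Sum>i=1..N. c_const p - 2 * tail_error \<epsilon> L) \<le> (\<Sum>i=1..N. local_energy p \<epsilon> u g (h i - r) (h i + r))"
      by (intro sum_mono) auto
    also have "\<dots> \<le> local_energy p \<epsilon> u g a b"
      by (rule sum_local_energy_le[where h = h, OF p \<epsilon>(1) fi windows disjoint r])
    finally have "real N * c_const p - real N * (2 * tail_error \<epsilon> L) \<le> local_energy p \<epsilon> u g a b"
      by (simp add: right_diff_distrib)
    moreover have "real N * (2 * tail_error \<epsilon> L) \<le> real N * (tail_constant * exp (- A * p / (2 * \<epsilon>)))"
      using two_tail_error_le[OF \<epsilon>(1) rate] by (intro mult_left_mono) auto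
    ultimately show "real N * c_const p - real N * tail_constant * exp (- A * p / (2 * \<epsilon>)) \<le> local_energy p \<epsilon> u g a b"
      by (simp add: mult.assoc)
  qed
qed

end

section \<open>Choice of the constants\<close>

lemma one_minus_powr_div_ge:
  fixes q B :: real
  assumes q: "q > 0" and B: "0 < B" "B < 1"
  shows "q / (1 + q * (1 - B)) \<le> (1 - B powr q) / (1 - B)"
proof -
  define x where "x = - q * ln B"
  define x0 where "x0 = q * (1 - B)"
  have "1 - B \<le> - ln B"
    using ln_le_minus_one[of B] B by simp
  then have "q * (1 - B) \<le> q * (- ln B)"
    by (rule mult_left_mono) (use q in auto)
  then have x0x: "x0 \<le> x"
    unfolding x_def x0_def by simp
  have x0: "x0 > 0"
    using q B by (simp add: x0_def)
  have Bq: "B powr q = exp (- x)"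
    using B by (simp add: powr_def x_def)
  have "exp (- x) * (1 + x) \<le> 1"
    using exp_ge_add_one_self[of x] by (simp add: exp_minus field_simps)
  then have "x / (1 + x) \<le> 1 - B powr q"
    using x0 x0x unfolding Bq by (simp add: field_simps)
  moreover have "x0 / (1 + x0) \<le> x / (1 + x)"
    using x0 x0x by (simp add: field_simps)
  ultimately have "x0 / (1 + x0) / (1 - B) \<le> (1 - B powr q) / (1 - B)"
    using B by (intro divide_right_mono) auto
  moreover have "x0 / (1 + x0) / (1 - B) = q / (1 + q * (1 - B))"
  proof -
    have "x0 / (1 - B) = q"
      using B by (simp add: x0_def)
    moreover have "x0 / (1 + x0) / (1 - B) = (x0 / (1 - B)) / (1 + x0)"
      by simp
    ultimately show ?thesis
      by (simp add: x0_def)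
  qed
  ultimately show ?thesis
    by simp
qed

lemma one_minus_two_mult_le_powr:
  fixes p \<rho> :: real
  assumes p: "p > 0" and \<rho>: "0 \<le> \<rho>" "\<rho> \<le> 1/2"
  shows "1 - 2 * p * \<rho> \<le> (1 - \<rho>) powr p"
proof -
  have pos: "1 - \<rho> > 0"
    using \<rho> by simp
  have "ln (1 / (1 - \<rho>)) \<le> 1 / (1 - \<rho>) - 1"
    using ln_le_minus_one pos by simp
  then have "- ln (1 - \<rho>) \<le> \<rho> / (1 - \<rho>)"
    using pos by (simp add: ln_div field_simps)
  moreover have "\<rho> \<le> 2 * \<rho> * (1 - \<rho>)"
    using mult_left_mono[of "2 * \<rho>" 1 \<rho>] \<rho> by (simp add: algebra_simps)
  then have "\<rho> / (1 - \<rho>) \<le> 2 * \<rho>"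
    using pos by (simp add: pos_divide_le_eq)
  ultimately have "p * (- 2 * \<rho>) \<le> p * ln (1 - \<rho>)"
    using p by (intro mult_left_mono) auto
  moreover have "1 + p * ln (1 - \<rho>) \<le> (1 - \<rho>) powr p"
    using exp_ge_add_one_self[of "p * ln (1 - \<rho>)"] pos by (simp add: powr_def mult.commute)
  ultimately show ?thesis
    by simp
qed

lemma powr_le_chord:
  fixes q B1 B :: real
  assumes q: "q \<ge> 1" and B1: "0 < B1" "B1 < 1" and B: "B1 \<le> B" "B \<le> 1"
  shows "(1 - B1 powr q) / (1 - B1) * (1 - B) \<le> 1 - B powr q"
proof -
  define t where "t = (B - B1) / (1 - B1)"
  have t: "0 \<le> t" "t \<le> 1"
    using B B1 by (auto simp: t_def field_simps)
  have "t * (1 - B1) = B - B1"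
    using B1 by (simp add: t_def)
  then have "B = (1 - t) *\<^sub>R B1 + t *\<^sub>R 1"
    by (simp add: algebra_simps)
  then have "B powr q \<le> (1 - t) * B1 powr q + t * 1 powr q"
    using convex_onD[OF powr_convex[OF q] t, of B1 1] B1 by simp
  moreover have "(1 - B1 powr q) / (1 - B1) * (1 - B) = (1 - t) * (1 - B1 powr q)"
    using B1 by (simp add: t_def field_simps)
  ultimately show ?thesis
    by (simp add: algebra_simps)
qed

lemma phi_coeff_mult_lambda_const:
  assumes p: "p > 1"
  shows "phi_coeff p * (p * lambda_const p) = p / (p - 1)"
proof -
  have p0: "p > 0" "p - 1 > 0"
    using p by auto
  have \<lambda>: "lambda_const p > 0"
    using p0 by (simp add: lambda_const_def)
  have "ln (phi_coeff p * (p * lambda_const p)) = ln (phi_coeff p) + ln p + ln (lambda_const p)"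
    using phi_coeff_pos[OF p] \<lambda> p0 by (simp add: ln_mult)
  also have "\<dots> = ln p - ln (p - 1)"
    using p0 by (simp add: phi_coeff_def lambda_const_def ln_div ln_mult ln_powr field_simps)
  also have "\<dots> = ln (p / (p - 1))"
    using p0 by (simp add: ln_div)
  finally show ?thesis
    using phi_coeff_pos[OF p] \<lambda> p0 by (simp add: ln_inj_iff)
qed

lemma exists_chord_slope_ge:
  fixes q s :: real
  assumes q: "q \<ge> 1" and s: "0 < s" "s < 1"
  shows "\<exists>B1. 0 < B1 \<and> B1 < 1 \<and> s * q \<le> (1 - B1 powr q) / (1 - B1)"
proof -
  have s1: "1 / s - 1 > 0"
    using s by (simp add: field_simps)
  define B1 where "B1 = 1 - min (1/2) ((1 / s - 1) / q)"
  have B1: "0 < B1" "B1 < 1"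
    using s1 q by (auto simp: B1_def min_def)
  have "q * (1 - B1) \<le> q * ((1 / s - 1) / q)"
    using q by (intro mult_left_mono) (auto simp: B1_def)
  then have "1 + q * (1 - B1) \<le> 1 / s"
    using q by simp
  moreover have "0 < (1 + q * (1 - B1)) * (1 / s)"
    using s q B1 by (simp add: add_pos_nonneg)
  ultimately have "q / (1 / s) \<le> q / (1 + q * (1 - B1))"
    using q by (intro divide_left_mono) auto
  also have "\<dots> \<le> (1 - B1 powr q) / (1 - B1)"
    using one_minus_powr_div_ge[of q B1] q B1 by simp
  finally show ?thesis
    using B1 by (auto simp: mult.commute)
qed

lemma exists_powr_ge:
  fixes p s :: real
  assumes p: "p > 0" and s: "0 < s" "s < 1"
  shows "\<exists>\<rho>. 0 < \<rho> \<and> \<rho> \<le> 1/2 \<and> s \<le> (1 - \<rho>) powr p"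
proof -
  define \<rho> where "\<rho> = min (1/4) ((1 - s) / (2 * p))"
  have \<rho>: "0 < \<rho>" "\<rho> \<le> 1/2"
    using s p by (auto simp: \<rho>_def)
  have "2 * p * \<rho> \<le> 2 * p * ((1 - s) / (2 * p))"
    using p by (intro mult_left_mono) (auto simp: \<rho>_def)
  then have "s \<le> (1 - \<rho>) powr p"
    using one_minus_two_mult_le_powr[of p \<rho>] p \<rho> by simp
  then show ?thesis
    using \<rho> by blast
qed

text \<open>The factor \<open>s\<^sup>2\<close> collects the two losses against the optimal rate \<open>p * lambda_const p\<close>:
  one from \<open>B1 < 1\<close>, one from evaluating \<open>phi\<close> at \<open>1 - \<rho>\<close> instead of \<open>1\<close>.\<close>
lemma exists_transition_constants:
  assumes p: "p > 1" and s: "0 < s" "s < 1"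
  shows "\<exists>\<rho> B1 k. transition_constants p \<rho> B1 k \<and> s\<^sup>2 * (p * lambda_const p) \<le> k"
proof -
  define q where "q = p / (p - 1)"
  have q: "q \<ge> 1"
    using p by (simp add: q_def)
  obtain B1 where B1: "0 < B1" "B1 < 1" and psi: "s * q \<le> (1 - B1 powr q) / (1 - B1)"
    using exists_chord_slope_ge[OF q s] by blast
  have psi_pos: "(1 - B1 powr q) / (1 - B1) > 0"
    using psi s q by (smt (verit) mult_pos_pos)
  obtain \<rho> where \<rho>: "0 < \<rho>" "\<rho> \<le> 1/2" and \<rho>s: "s \<le> (1 - \<rho>) powr p"
    using exists_powr_ge[of p s] p s by auto
  have R: "well_ratio p \<rho> > 0"
    using well_ratio_pos[OF p, of \<rho>] \<rho> by simp
  define k where "k = (1 - B1 powr q) / (1 - B1) / well_ratio p \<rho>"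
  have "transition_constants p \<rho> B1 k"
  proof
    show "k > 0"
      using psi_pos R by (simp add: k_def del: divide_divide_eq_left)
    show "k * well_ratio p \<rho> * (1 - B) \<le> 1 - B powr (p / (p - 1))" if "B1 \<le> B" "B \<le> 1" for B
      using powr_le_chord[OF q B1 that] R by (simp add: k_def q_def)
  qed (use p \<rho> B1 in auto)
  moreover have "s\<^sup>2 * (p * lambda_const p) \<le> k"
  proof -
    have "q = phi_coeff p * (p * lambda_const p)"
      using phi_coeff_mult_lambda_const[OF p] by (simp add: q_def)
    then have "s\<^sup>2 * (p * lambda_const p) = s * q * s / phi_coeff p"
      using phi_coeff_pos[OF p] by (simp add: power2_eq_square)
    also have "\<dots> \<le> (1 - B1 powr q) / (1 - B1) * (1 - \<rho>) powr p / phi_coeff p"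
      using psi psi_pos \<rho>s s q phi_coeff_pos[OF p] by (intro divide_right_mono mult_mono) auto
    also have "\<dots> = k"
      by (simp add: k_def well_ratio_def)
    finally show ?thesis .
  qed
  ultimately show ?thesis
    by blast
qed

lemma exists_transition_constants_with_rate:
  assumes p: "p > 1" and r: "r > 0" and A: "0 < A" "A < r * sqrt 2 * lambda_const p"
  shows "\<exists>\<rho> B1 k L. transition_constants p \<rho> B1 k \<and> 0 < L \<and> L < r \<and> A * p / 2 \<le> k * L"
proof -
  have \<lambda>: "lambda_const p > 0"
    using p by (simp add: lambda_const_def)
  define \<theta> where "\<theta> = A / (r * sqrt 2 * lambda_const p)"
  have \<theta>: "0 < \<theta>" "\<theta> < 1"
    using A r \<lambda> by (auto simp: \<theta>_def field_simps)
  define s where "s = \<theta> powr (1/3)"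
  have s: "0 < s" "s < 1"
    using \<theta> powr_less_mono2[of "1/3" \<theta> 1] by (auto simp: s_def)
  have s3: "s\<^sup>2 * s = \<theta>"
    using \<theta> by (simp add: s_def power2_eq_square flip: powr_add)
  obtain \<rho> B1 k where tc: "transition_constants p \<rho> B1 k" and k: "s\<^sup>2 * (p * lambda_const p) \<le> k"
    using exists_transition_constants[OF p s] by blast
  have "A * p / 2 \<le> A * p / sqrt 2"
    using A p by (intro divide_left_mono) (auto simp: real_le_lsqrt)
  also have "\<dots> = s\<^sup>2 * (p * lambda_const p) * (r * s)"
    using s3 r \<lambda> by (simp add: \<theta>_def field_simps)
  also have "\<dots> \<le> k * (r * s)"
    using k r s by (intro mult_right_mono) auto
  finally show ?thesis
    using tc r s by (intro exI[of _ \<rho>] exI[of _ B1] exI[of _ k] exI[of _ "r * s"]) auto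
qed

section \<open>Locating the transitions\<close>

lemma integral_abs_ge_of_decreasing:
  fixes G :: "real \<Rightarrow> real"
  assumes l: "l > 0" and \<rho>: "\<rho> > 0" and cont: "continuous_on {c..c + l} G"
    and dec: "\<And>x y. c \<le> x \<Longrightarrow> x \<le> y \<Longrightarrow> y \<le> c + l \<Longrightarrow> G y - G x \<le> - \<rho> * (y - x)"
  shows "\<rho> * l * l / 18 \<le> integral {c..c + l} (\<lambda>x. \<bar>G x\<bar>)"
proof -
  have cont_abs: "continuous_on {c..c + l} (\<lambda>x. \<bar>G x\<bar>)"
    using cont by (intro continuous_intros)
  have third: "\<rho> * l * l / 18 \<le> integral {c..c + l} (\<lambda>x. \<bar>G x\<bar>)"
    if "c \<le> x0" "x0 + l / 3 \<le> c + l" and big: "\<And>x. x \<in> {x0..x0 + l / 3} \<Longrightarrow> \<rho> * l / 6 \<le> \<bar>G x\<bar>" for x0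
  proof -
    have "\<rho> * l * l / 18 = integral {x0..x0 + l / 3} (\<lambda>x. \<rho> * l / 6)"
      using l by simp
    also have "\<dots> \<le> integral {x0..x0 + l / 3} (\<lambda>x. \<bar>G x\<bar>)"
      using big that l by (intro integral_le integrable_continuous_real continuous_on_subset[OF cont_abs]) auto
    also have "\<dots> \<le> integral {c..c + l} (\<lambda>x. \<bar>G x\<bar>)"
      using that l by (intro integral_subset_le integrable_continuous_real continuous_on_subset[OF cont_abs]) auto
    finally show ?thesis .
  qed
  show ?thesis
  proof (cases "\<forall>x\<in>{c..c + l / 3}. \<rho> * l / 6 \<le> G x")
    case True
    then show ?thesis
      using l by (intro third[of c]) force+
  next
    case False
    then obtain x0 where x0: "x0 \<in> {c..c + l / 3}" "G x0 < \<rho> * l / 6"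
      by auto
    show ?thesis
    proof (rule third[of "c + 2 * l / 3"])
      fix y assume y: "y \<in> {c + 2 * l / 3..c + 2 * l / 3 + l / 3}"
      have "G y - G x0 \<le> - \<rho> * (y - x0)"
        using dec[of x0 y] x0 y l by auto
      moreover have "\<rho> * (l / 3) \<le> \<rho> * (y - x0)"
        using x0 y \<rho> by (intro mult_left_mono) auto
      ultimately show "\<rho> * l / 6 \<le> \<bar>G y\<bar>"
        using x0 by simp
    qed (use l in auto)
  qed
qed

lemma set_integral_abs_prim_diff:
  assumes u: "continuous_on {a..b} u" and v: "set_integrable lborel {a..b} v"
  shows "(\<integral> x\<in>{a..b}. \<bar>prim a u x - prim a v x\<bar> \<partial>lborel)
           = integral {a..b} (\<lambda>x. \<bar>integral {a..x} u - integral {a..x} v\<bar>)"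
proof -
  have u': "set_integrable lborel {a..b} u"
    by (rule borel_integrable_atLeastAtMost'[OF u])
  have eq: "\<bar>prim a u x - prim a v x\<bar> = \<bar>integral {a..x} u - integral {a..x} v\<bar>" if "x \<in> {a..b}" for x
    using prim_eq_integral[OF u' that] prim_eq_integral[OF v that] by simp
  have "continuous_on {a..b} (\<lambda>x. \<bar>integral {a..x} u - integral {a..x} v\<bar>)"
    using u' v by (intro continuous_intros indefinite_integral_continuous_1 set_borel_integral_eq_integral(1))
  then have "continuous_on {a..b} (\<lambda>x. \<bar>prim a u x - prim a v x\<bar>)"
    by (rule continuous_on_eq) (simp add: eq)
  then have "(\<integral> x\<in>{a..b}. \<bar>prim a u x - prim a v x\<bar> \<partial>lborel) = integral {a..b} (\<lambda>x. \<bar>prim a u x - prim a v x\<bar>)"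
    by (intro set_borel_integral_eq_integral(2) borel_integrable_atLeastAtMost')
  also have "\<dots> = integral {a..b} (\<lambda>x. \<bar>integral {a..x} u - integral {a..x} v\<bar>)"
    by (intro integral_cong) (simp add: eq)
  finally show ?thesis .
qed

lemma primitive_difference_slope_le:
  fixes u v :: "real \<Rightarrow> real"
  assumes u: "continuous_on {a..b} u" and vI: "v integrable_on {a..b}" and \<sigma>: "\<sigma> \<in> {-1, 1}"
    and xy: "a \<le> x" "x \<le> y" "y \<le> b"
    and v_const: "\<And>t. t \<in> {x..y} \<Longrightarrow> v t = \<sigma>" and below: "\<And>t. t \<in> {x..y} \<Longrightarrow> \<sigma> * u t \<le> 1 - \<rho>"
  shows "\<sigma> * (integral {a..y} u - integral {a..y} v) - \<sigma> * (integral {a..x} u - integral {a..x} v)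
           \<le> - \<rho> * (y - x)"
proof -
  have uI: "u integrable_on {a..b}"
    by (rule integrable_continuous_real[OF u])
  have "integral {a..y} u - integral {a..y} v - (integral {a..x} u - integral {a..x} v)
      = integral {x..y} u - integral {x..y} v"
    using xy Henstock_Kurzweil_Integration.integral_combine[OF _ _ integrable_subinterval_real[OF uI], of a x y]
      Henstock_Kurzweil_Integration.integral_combine[OF _ _ integrable_subinterval_real[OF vI], of a x y]
    by simp
  moreover have "integral {x..y} v = \<sigma> * (y - x)"
    using xy v_const integral_cong[of "{x..y}" v "\<lambda>_. \<sigma>"] by simp
  ultimately have "\<sigma> * (integral {a..y} u - integral {a..y} v) - \<sigma> * (integral {a..x} u - integral {a..x} v)
      = \<sigma> * integral {x..y} u - (y - x)"
    using \<sigma> by (auto simp: algebra_simps)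
  moreover have "\<sigma> * integral {x..y} u \<le> (1 - \<rho>) * (y - x)"
  proof -
    have "continuous_on {x..y} u"
      using xy by (intro continuous_on_subset[OF u]) auto
    then have "integral {x..y} (\<lambda>t. \<sigma> * u t) \<le> integral {x..y} (\<lambda>_. 1 - \<rho>)"
      using below xy by (intro integral_le integrable_continuous_real continuous_intros) auto
    then show ?thesis
      using xy by (simp add: mult.commute)
  qed
  moreover have "(1 - \<rho>) * (y - x) - (y - x) = - \<rho> * (y - x)"
    by (simp add: algebra_simps)
  ultimately show ?thesis
    by linarith
qed

text \<open>If \<open>\<sigma> u < 1 - \<rho>\<close> on a window where \<open>v = \<sigma>\<close>, then \<open>\<sigma> (prim a u - prim a v)\<close> decreases there with
  slope at most \<open>- \<rho>\<close>, which costs \<open>L\<^sup>1\<close> distance.\<close>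
lemma exists_near_well_point:
  fixes u v :: "real \<Rightarrow> real"
  assumes ac: "a \<le> c" and cb: "c + l \<le> b" and l: "l > 0" and \<rho>: "\<rho> > 0"
    and u: "continuous_on {a..b} u" and v: "set_integrable lborel {a..b} v"
    and \<sigma>: "\<sigma> \<in> {-1, 1}" and v_const: "\<And>t. t \<in> {c..c + l} \<Longrightarrow> v t = \<sigma>"
    and close: "(\<integral> x\<in>{a..b}. \<bar>prim a u x - prim a v x\<bar> \<partial>lborel) < \<rho> * l * l / 18"
  shows "\<exists>t\<in>{c..c + l}. 1 - \<rho> \<le> \<sigma> * u t"
proof (rule ccontr)
  assume "\<not> (\<exists>t\<in>{c..c + l}. 1 - \<rho> \<le> \<sigma> * u t)"
  then have below: "\<And>t. t \<in> {c..c + l} \<Longrightarrow> \<sigma> * u t \<le> 1 - \<rho>"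
    by force
  have uI: "u integrable_on {a..b}" and vI: "v integrable_on {a..b}"
    using integrable_continuous_real[OF u] set_borel_integral_eq_integral(1)[OF v] by auto
  define D where "D x = integral {a..x} u - integral {a..x} v" for x
  have cD: "continuous_on {a..b} D"
    unfolding D_def by (intro continuous_on_diff indefinite_integral_continuous_1 uI vI)
  have dec: "\<sigma> * D y - \<sigma> * D x \<le> - \<rho> * (y - x)" if "c \<le> x" "x \<le> y" "y \<le> c + l" for x y
    unfolding D_def using that ac cb below v_const
    by (intro primitive_difference_slope_le[OF u vI \<sigma>]) auto
  have "\<rho> * l * l / 18 \<le> integral {c..c + l} (\<lambda>x. \<bar>\<sigma> * D x\<bar>)"
    using ac cb l by (intro integral_abs_ge_of_decreasing[OF l \<rho>] dec continuous_intros
                             continuous_on_subset[OF cD]) auto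
  also have "\<dots> = integral {c..c + l} (\<lambda>x. \<bar>D x\<bar>)"
    using \<sigma> by (intro integral_cong) (auto simp: abs_mult)
  also have "\<dots> \<le> integral {a..b} (\<lambda>x. \<bar>D x\<bar>)"
  proof -
    have cont: "continuous_on {a..b} (\<lambda>x. \<bar>D x\<bar>)"
      using cD by (intro continuous_intros)
    show ?thesis
      using ac cb l by (intro integral_subset_le integrable_continuous_real continuous_on_subset[OF cont]) auto
  qed
  finally show False
    using close set_integral_abs_prim_diff[OF u v] by (simp add: D_def)
qed

lemma jumps_separated:
  fixes h :: "nat \<Rightarrow> real"
  assumes gap: "\<And>i. 1 \<le> i \<Longrightarrow> i < N \<Longrightarrow> d < h (i + 1) - h i" and d: "d \<ge> 0"
  shows "1 \<le> i \<Longrightarrow> i < j \<Longrightarrow> j \<le> N \<Longrightarrow> h i + d < h j"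
proof (induction j)
  case (Suc j)
  show ?case
  proof (cases "i = j")
    case True
    then show ?thesis
      using gap[of i] Suc.prems by simp
  next
    case False
    then have "h i + d < h j"
      using Suc by simp
    also have "h j < h (Suc j)"
      using gap[of j] Suc.prems False d by simp
    finally show ?thesis .
  qed
qed simp

lemma jump_windows:
  fixes h :: "nat \<Rightarrow> real"
  assumes r: "r > 0" and gap: "\<And>i. 1 \<le> i \<Longrightarrow> i < N \<Longrightarrow> r < (h (i + 1) - h i) / 2"
    and a: "a \<le> h 1 - r" and b: "h N + r \<le> b"
  shows "\<And>i j. 1 \<le> i \<Longrightarrow> i < j \<Longrightarrow> j \<le> N \<Longrightarrow> h i + 2 * r < h j"
    and "\<And>i. 1 \<le> i \<Longrightarrow> i < N \<Longrightarrow> h i + r \<le> h (i + 1) - r"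
    and "\<And>i. 1 \<le> i \<Longrightarrow> i \<le> N \<Longrightarrow> a \<le> h i - r \<and> h i + r \<le> b"
proof -
  have gap2: "2 * r < h (i + 1) - h i" if "1 \<le> i" "i < N" for i
    using gap[OF that] by simp
  show sep: "h i + 2 * r < h j" if "1 \<le> i" "i < j" "j \<le> N" for i j
    using jumps_separated[where d = "2 * r" and h = h and N = N, OF gap2 _ that] r by simp
  show "h i + r \<le> h (i + 1) - r" if "1 \<le> i" "i < N" for i
    using gap2[OF that] by simp
  show "a \<le> h i - r \<and> h i + r \<le> b" if "1 \<le> i" "i \<le> N" for i
  proof -
    have "h 1 \<le> h i"
      using sep[of 1 i] that r by (cases "i = 1") auto
    moreover have "h i \<le> h N"
      using sep[of i N] that r by (cases "i = N") auto
    ultimately show ?thesis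
      using a b by simp
  qed
qed

lemma step_value_between_jumps:
  fixes h :: "nat \<Rightarrow> real" and v :: "real \<Rightarrow> real"
  assumes v: "\<forall>x\<in>{a..b} - h ` {1..N}. v x = s0 * (-1) ^ card {i\<in>{1..N}. h i < x}"
    and t: "t \<in> {a..b}" and m: "m \<le> N"
    and below: "\<And>j. 1 \<le> j \<Longrightarrow> j \<le> m \<Longrightarrow> h j < t" and above: "\<And>j. m < j \<Longrightarrow> j \<le> N \<Longrightarrow> t < h j"
  shows "v t = s0 * (-1) ^ m"
proof -
  have "{j\<in>{1..N}. h j < t} = {1..m}"
  proof (intro set_eqI iffI)
    fix j assume j: "j \<in> {j\<in>{1..N}. h j < t}"
    show "j \<in> {1..m}"
    proof (rule ccontr)
      assume "j \<notin> {1..m}"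
      then show False
        using j above[of j] by auto
    qed
  next
    fix j assume "j \<in> {1..m}"
    then show "j \<in> {j\<in>{1..N}. h j < t}"
      using m below[of j] by auto
  qed
  moreover have "t \<notin> h ` {1..N}"
  proof
    assume "t \<in> h ` {1..N}"
    then obtain j where "j \<in> {1..N}" "t = h j"
      by auto
    then show False
      using below[of j] above[of j] by (cases "j \<le> m") auto
  qed
  ultimately show ?thesis
    using v t by simp
qed

lemma step_value_near_jump:
  fixes h :: "nat \<Rightarrow> real" and v :: "real \<Rightarrow> real"
  assumes sep: "\<And>i j. 1 \<le> i \<Longrightarrow> i < j \<Longrightarrow> j \<le> N \<Longrightarrow> h i + 2 * r < h j"
    and v: "\<forall>x\<in>{a..b} - h ` {1..N}. v x = s0 * (-1) ^ card {i\<in>{1..N}. h i < x}"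
    and r: "r \<ge> 0" and i: "1 \<le> i" "i \<le> N" and t: "t \<in> {a..b}"
  shows "h i < t \<Longrightarrow> t < h i + 2 * r \<Longrightarrow> v t = s0 * (-1) ^ i"
    and "h i - 2 * r < t \<Longrightarrow> t < h i \<Longrightarrow> v t = - (s0 * (-1) ^ i)"
proof -
  show "v t = s0 * (-1) ^ i" if "h i < t" "t < h i + 2 * r"
  proof (rule step_value_between_jumps[OF v t])
    show "h j < t" if "1 \<le> j" "j \<le> i" for j
      using sep[of j i] that i r \<open>h i < t\<close> by (cases "j = i") auto
    show "t < h j" if "i < j" "j \<le> N" for j
      using sep[of i j] that i \<open>t < h i + 2 * r\<close> by auto
  qed (use i in auto)
  show "v t = - (s0 * (-1) ^ i)" if "h i - 2 * r < t" "t < h i"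
  proof -
    have "v t = s0 * (-1) ^ (i - 1)"
    proof (rule step_value_between_jumps[OF v t])
      show "h j < t" if "1 \<le> j" "j \<le> i - 1" for j
      proof -
        have "j < i"
          using that i by linarith
        then show ?thesis
          using sep[of j i] that \<open>h i - 2 * r < t\<close> i by auto
      qed
      show "t < h j" if "i - 1 < j" "j \<le> N" for j
      proof (cases "j = i")
        case False
        then have "i < j"
          using that i by linarith
        then show ?thesis
          using sep[of i j] that r i \<open>t < h i\<close> by auto
      qed (use \<open>t < h i\<close> in simp)
    qed (use i in auto)
    moreover have "(-1::real) ^ i = - ((-1) ^ (i - 1))"
      using i by (cases i) auto
    ultimately show ?thesis
      by simp
  qed
qed

lemma step_function_set_integrable:
  fixes v :: "real \<Rightarrow> real" and h :: "nat \<Rightarrow> real"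
  assumes v_bound: "\<And>x. x \<in> {a..b} \<Longrightarrow> v x \<in> {-1, 1}"
    and v_step: "\<forall>x\<in>{a..b} - h ` {1..N}. v x = s0 * (-1) ^ card {i\<in>{1..N}. h i < x}"
  shows "set_integrable lborel {a..b} v"
proof -
  define w where "w x = s0 * (\<Prod>i\<in>{1..N}. if h i < x then - 1 else (1::real))" for x
  have "(\<Prod>i\<in>I. if P i then - 1 else (1::real)) = (-1) ^ card {i\<in>I. P i}" if "finite I" for I :: "nat set" and P
    using that by (simp add: prod.If_cases Collect_conj_eq Int_commute)
  then have w_eq: "w x = s0 * (-1) ^ card {i\<in>{1..N}. h i < x}" for x
    by (simp add: w_def)
  have "(\<lambda>x. indicator {a..b} x *\<^sub>R w x) \<in> borel_measurable lborel"
    unfolding w_def by measurable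
  then have "(\<lambda>x. indicator {a..b} x *\<^sub>R v x) \<in> borel_measurable lborel"
  proof (rule measurable_discrete_difference[where X = "h ` {1..N}"])
    show "indicator {a..b} x *\<^sub>R w x = indicator {a..b} x *\<^sub>R v x" if "x \<notin> h ` {1..N}" for x
      using v_step w_eq that by (auto simp: indicator_def)
  qed auto
  then show ?thesis
    unfolding set_integrable_def
  proof (rule integrableI_bounded_set[where A = "{a..b}" and B = 1, rotated])
    show "AE x in lborel. x \<in> {a..b} \<longrightarrow> norm (indicator {a..b} x *\<^sub>R v x) \<le> 1"
      using v_bound by (intro AE_I2) (force simp: indicator_def)
    show "emeasure lborel {a..b} < \<infinity>"
      by (cases "a \<le> b") auto
  qed (auto simp: indicator_def)
qed

lemma exists_transition_points:
  fixes h :: "nat \<Rightarrow> real" and u v :: "real \<Rightarrow> real"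
  assumes sep: "\<And>i j. 1 \<le> i \<Longrightarrow> i < j \<Longrightarrow> j \<le> N \<Longrightarrow> h i + 2 * r < h j"
    and v_step: "\<forall>x\<in>{a..b} - h ` {1..N}. v x = s0 * (-1) ^ card {i\<in>{1..N}. h i < x}" and s0: "s0 \<in> {-1, 1}"
    and v: "set_integrable lborel {a..b} v" and u: "continuous_on {a..b} u"
    and windows: "\<And>i. 1 \<le> i \<Longrightarrow> i \<le> N \<Longrightarrow> a \<le> h i - r \<and> h i + r \<le> b"
    and L: "0 < L" "L < r" and \<rho>: "\<rho> > 0"
    and close: "(\<integral> x\<in>{a..b}. \<bar>prim a u x - prim a v x\<bar> \<partial>lborel) \<le> \<rho> * (r - L)\<^sup>2 / 144"
    and i: "1 \<le> i" "i \<le> N"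
  shows "\<exists>z0 z1. h i - r + L \<le> z0 \<and> z0 \<le> z1 \<and> z1 + L \<le> h i + r \<and>
           s0 * (-1) ^ i * u z0 \<le> - (1 - \<rho>) \<and> 1 - \<rho> \<le> s0 * (-1) ^ i * u z1"
proof -
  define l where "l = (r - L) / 2"
  have l: "l > 0" "2 * l = r - L"
    using L by (auto simp: l_def)
  have window: "a \<le> h i - r" "h i + r \<le> b"
    using windows[OF i] by auto
  have "\<rho> * l * l / 18 = \<rho> * (r - L)\<^sup>2 / 72" "0 < \<rho> * (r - L)\<^sup>2"
    using \<rho> L by (simp_all add: l_def power2_eq_square)
  then have close': "(\<integral> x\<in>{a..b}. \<bar>prim a u x - prim a v x\<bar> \<partial>lborel) < \<rho> * l * l / 18"
    using close by linarith
  have \<sigma>: "s0 * (-1) ^ i \<in> {-1, 1::real}" "- (s0 * (-1) ^ i) \<in> {-1, 1::real}"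
    using s0 by (auto simp: minus_one_power_iff)
  have "\<exists>t\<in>{h i + l..h i + l + l}. 1 - \<rho> \<le> s0 * (-1) ^ i * u t"
  proof (rule exists_near_well_point[OF _ _ l(1) \<rho> u v \<sigma>(1)])
    show "v t = s0 * (-1) ^ i" if "t \<in> {h i + l..h i + l + l}" for t
      using that l L window by (intro step_value_near_jump(1)[OF sep v_step _ i]) auto
    show "a \<le> h i + l" "h i + l + l \<le> b"
      using window l L by linarith+
  qed (rule close')
  then obtain z1 where z1: "z1 \<in> {h i + l..h i + l + l}" "1 - \<rho> \<le> s0 * (-1) ^ i * u z1"
    by blast
  have "\<exists>t\<in>{h i - 2 * l..h i - 2 * l + l}. 1 - \<rho> \<le> - (s0 * (-1) ^ i) * u t"
  proof (rule exists_near_well_point[OF _ _ l(1) \<rho> u v \<sigma>(2)])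
    show "v t = - (s0 * (-1) ^ i)" if "t \<in> {h i - 2 * l..h i - 2 * l + l}" for t
      using that l L window by (intro step_value_near_jump(2)[OF sep v_step _ i]) auto
    show "a \<le> h i - 2 * l" "h i - 2 * l + l \<le> b"
      using window l L by linarith+
  qed (rule close')
  then obtain z0 where z0: "z0 \<in> {h i - 2 * l..h i - 2 * l + l}" "1 - \<rho> \<le> - (s0 * (-1) ^ i) * u z0"
    by blast
  show ?thesis
    using z0 z1 l by (intro exI[of _ z0] exI[of _ z1]) auto
qed

theorem proposition3p2:
  fixes a b p A r :: real and N :: nat and h :: "nat \<Rightarrow> real" and v :: "real \<Rightarrow> real"
  assumes "a < b" and "p > 1"
    and "N \<ge> 1"
    and "a < h 1" and "h N < b"
    and "\<And>i. 1 \<le> i \<Longrightarrow> i < N \<Longrightarrow> h i < h (i + 1)"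
    and "\<And>x. x \<in> {a..b} \<Longrightarrow> v x \<in> {-1, 1}"
    and "\<exists>s\<in>{-1, 1::real}. \<forall>x\<in>{a..b} - h ` {1..N}.
           v x = s * (-1) ^ card {i\<in>{1..N}. h i < x}"
    and "r > 0"
    and "\<And>i. 1 \<le> i \<Longrightarrow> i < N \<Longrightarrow> r < (h (i + 1) - h i) / 2"
    and "a \<le> h 1 - r" and "h N + r \<le> b"
    and "0 < A" and "A < r * sqrt 2 * lambda_const p"
  shows "\<exists>\<epsilon>0 C \<delta>. \<epsilon>0 > 0 \<and> C > 0 \<and> \<delta> > 0 \<and>
    (\<forall>u g. H1_with_deriv a b u g \<longrightarrow>
       (\<integral> x\<in>{a..b}. \<bar>prim a u x - prim a v x\<bar> \<partial>lborel) \<le> \<delta> \<longrightarrow>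
       (\<forall>\<epsilon>. 0 < \<epsilon> \<and> \<epsilon> < \<epsilon>0 \<longrightarrow>
          energy p a b \<epsilon> u g \<ge> ennreal (real N * c_const p - C * exp (- A * p / (2 * \<epsilon>)))))"
proof -
  obtain s0 where s0: "s0 \<in> {-1, 1}"
    and v_step: "\<forall>x\<in>{a..b} - h ` {1..N}. v x = s0 * (-1) ^ card {i\<in>{1..N}. h i < x}"
    using assms(8) by blast
  obtain \<rho> B1 k L where constants: "transition_constants p \<rho> B1 k"
    and L: "0 < L" "L < r" and A_rate: "A * p / 2 \<le> k * L"
    using exists_transition_constants_with_rate[OF assms(2,9,13,14)] by blast
  interpret transition_constants p \<rho> B1 k
    by (rule constants)
  note windows = jump_windows[OF assms(9,10,11,12)]
  have \<sigma>: "s0 * (-1) ^ i \<in> {-1, 1}" for i :: nat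
    using s0 by (auto simp: minus_one_power_iff)
  show ?thesis
  proof (rule exI[of _ "L / layer_width"], rule exI[of _ "real N * tail_constant"],
      rule exI[of _ "\<rho> * (r - L)\<^sup>2 / 144"], intro conjI allI impI)
    fix u g \<epsilon>
    assume H: "H1_with_deriv a b u g" and \<epsilon>: "0 < \<epsilon> \<and> \<epsilon> < L / layer_width"
      and close: "(\<integral> x\<in>{a..b}. \<bar>prim a u x - prim a v x\<bar> \<partial>lborel) \<le> \<rho> * (r - L)\<^sup>2 / 144"
    note u = weak_derivative_on_continuous[OF weak_derivative_on_if_H1_with_deriv[OF H]]
    show "ennreal (real N * c_const p - real N * tail_constant * exp (- A * p / (2 * \<epsilon>))) \<le> energy p a b \<epsilon> u g"
      using energy_lower_bound[where h = h, OF _ _ A_rate H windows(3,2) _ \<sigma>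
          exists_transition_points[OF windows(1) v_step s0 step_function_set_integrable[OF assms(7) v_step]
            u windows(3) L \<rho>(1) close]] \<epsilon> assms(9)
      by auto
  qed (use L \<rho> assms(3) layer_width_pos tail_constant_pos in auto)
qed

end
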